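(* Under the assumptions below, suppose $\mu$ is sufficiently large. The data $(X_i,U_i,\mathcal{E}_i)$ are informative for the cooperative output regulation problem if and only if, for every $i\in\{1,\dots,N\}$, there exists a right inverse $X_i^{+}$ of $X_i$ such that $(X_i\mathcal{D}_{11}-E_iV)X_i^{+}$ is stable, and the data-driven regulator equations $(X_i\mathcal{D}_{11}-E_iV)M_i=X_iM_iS-E_i$, $(\mathcal{E}_i-F_iV)M_i=-F_i$ have a solution $M_i$. Moreover, $K_{2i}$ can be computed as $K_{2i}=(U_i-K_{1i}X_i)M_i$.
   Context: Leader–follower multi-agent system with $N$ followers. Follower $i$: $\dot x_i=A_ix_i+B_iu_i+E_iv$, $e_i=C_ix_i+D_iu_i+F_iv$, with $x_i\in\mathbb{R}^{n_i}$, $e_i\in\mathbb{R}^{p}$; exosystem $\dot v=Sv$, $v\in\mathbb{R}^q$. $A_i,B_i,C_i,D_i$ unknown; $E_i,F_i,S$ known. Distributed controller: $u_i=K_{1i}x_i+K_{2i}\eta_i$, $\dot\eta_i=S\eta_i+\mu[\sum_j a_{ij}(\eta_j-\eta_i)+a_{i0}(v-\eta_i)]$, with $K_{1i}=U_iX_i^{+}$. Data: signals expanded in an orthogonal polynomial basis truncated at degree $N$; $X_i,U_i,\mathcal{E}_i,V$ are the matrices of the first $N+1$ coefficient vectors of $x_i,u_i,e_i,v$, and $\mathcal{D}_{11}$ is the leading $(N+1)\times(N+1)$ block of the basis differentiation matrix. Exact data: $X_i\mathcal{D}_{11}=A_iX_i+B_iU_i+E_iV$, $\mathcal{E}_i=C_iX_i+D_iU_i+F_iV$.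 The data are informative for cooperative output regulation if every system consistent with the data admits gains making the closed-loop matrix Hurwitz and the regulator equations $\Pi_iS=A_i\Pi_i+B_i\Gamma_i+E_i$, $0=C_i\Pi_i+D_i\Gamma_i+F_i$ (with $\Gamma_i=K_{1i}\Pi_i+K_{2i}$) solvable, so that $e(t)\to0$. Assumptions: $S$ has no eigenvalues with negative real part; the graph is unknown but contains a directed spanning tree rooted at the leader; nonzero Laplacian entries satisfy $\varepsilon_1\le|\mathcal{L}_{ij}|\le\varepsilon_2$. *)

theory Defs
  imports Complex_Main "Jordan_Normal_Form.Char_Poly"
begin

definition hurwitz :: "real mat \<Rightarrow> bool" where
  "hurwitz M \<longleftrightarrow> square_mat M \<and>
     (\<forall>lam. eigenvalue (map_mat complex_of_real M) lam \<longrightarrow> Re lam < 0)"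

definition right_inverse :: "real mat \<Rightarrow> real mat \<Rightarrow> bool" where
  "right_inverse X Xp \<longleftrightarrow> Xp \<in> carrier_mat (dim_col X) (dim_row X) \<and> X * Xp = 1\<^sub>m (dim_row X)"

text \<open>Graph on nodes 0..N: node 0 is the leader, nodes 1..N are the followers.
  a i j is the weight of the edge j \<rightarrow> i (node i receives information from node j).\<close>
definition laplacian :: "nat \<Rightarrow> (nat \<Rightarrow> nat \<Rightarrow> real) \<Rightarrow> nat \<Rightarrow> nat \<Rightarrow> real" where
  "laplacian N a i j = (if i = j then (\<Sum>k\<in>{0..N} - {i}. a i k) else - a i j)"

definition graph_edges :: "nat \<Rightarrow> (nat \<Rightarrow> nat \<Rightarrow> real) \<Rightarrow> (nat \<times> nat) set" where
  "graph_edges N a = {(j, i). i \<in> {0..N} \<and> j \<in> {0..N} \<and> a i j \<noteq> 0}"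

definition admissible_graph :: "nat \<Rightarrow> real \<Rightarrow> real \<Rightarrow> (nat \<Rightarrow> nat \<Rightarrow> real) \<Rightarrow> bool" where
  "admissible_graph N eps1 eps2 a \<longleftrightarrow>
     (\<forall>i\<in>{0..N}. \<forall>j\<in>{0..N}. a i j \<ge> 0) \<and>
     (\<forall>i\<in>{0..N}. a i i = 0) \<and>
     (\<forall>j\<in>{0..N}. a 0 j = 0) \<and>
     (\<forall>i\<in>{0..N}. (0, i) \<in> (graph_edges N a)\<^sup>*) \<and>
     (\<forall>i\<in>{0..N}. \<forall>j\<in>{0..N}. laplacian N a i j \<noteq> 0 \<longrightarrow>
        eps1 \<le> \<bar>laplacian N a i j\<bar> \<and> \<bar>laplacian N a i j\<bar> \<le> eps2)"

text \<open>Matrix of the distributed observer: I_N \<otimes> S - mu (H \<otimes> I_q), where H is the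
  follower block (rows/columns 1..N) of the Laplacian (it contains the leader weights
  a i 0 on the diagonal). Block (i,j), 0-based, corresponds to followers i+1, j+1.\<close>
definition observer_mat :: "nat \<Rightarrow> real mat \<Rightarrow> (nat \<Rightarrow> nat \<Rightarrow> real) \<Rightarrow> real \<Rightarrow> real mat" where
  "observer_mat N S a mu = (let q = dim_row S in
     mat (N * q) (N * q) (\<lambda>(r, c).
       (if r div q = c div q then S $$ (r mod q, c mod q) else 0)
       - mu * laplacian N a (r div q + 1) (c div q + 1) * (if r mod q = c mod q then 1 else 0)))"

definition closed_loop_mat ::
  "nat \<Rightarrow> real mat \<Rightarrow> (nat \<Rightarrow> nat \<Rightarrow> real) \<Rightarrow> real \<Rightarrow> (nat \<Rightarrow> real mat) \<Rightarrow> (nat \<Rightarrow> real mat) \<Rightarrow> real mat" where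
  "closed_loop_mat N S a mu Acl BK2 = (let
     TL = diag_block_mat (map Acl [1..<N+1]);
     TR = diag_block_mat (map BK2 [1..<N+1]);
     BR = observer_mat N S a mu
   in four_block_mat TL TR (0\<^sub>m (dim_row BR) (dim_col TL)) BR)"

definition consistent_sys ::
  "real mat \<Rightarrow> real mat \<Rightarrow> real mat \<Rightarrow> real mat \<Rightarrow> real mat \<Rightarrow> real mat \<Rightarrow> real mat \<Rightarrow> real mat
   \<Rightarrow> real mat \<Rightarrow> real mat \<Rightarrow> real mat \<Rightarrow> bool" where
  "consistent_sys D11 V X U Ec E F A B C D \<longleftrightarrow>
     A \<in> carrier_mat (dim_row X) (dim_row X) \<and> B \<in> carrier_mat (dim_row X) (dim_row U) \<and>
     C \<in> carrier_mat (dim_row Ec) (dim_row X) \<and> D \<in> carrier_mat (dim_row Ec) (dim_row U) \<and>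
     X * D11 = A * X + B * U + E * V \<and> Ec = C * X + D * U + F * V"

definition gains_work ::
  "nat \<Rightarrow> real mat \<Rightarrow> (nat \<Rightarrow> nat \<Rightarrow> real) \<Rightarrow> real \<Rightarrow> real mat \<Rightarrow> real mat \<Rightarrow>
   (nat \<Rightarrow> real mat) \<Rightarrow> (nat \<Rightarrow> real mat) \<Rightarrow> (nat \<Rightarrow> real mat) \<Rightarrow> (nat \<Rightarrow> real mat) \<Rightarrow> (nat \<Rightarrow> real mat) \<Rightarrow>
   (nat \<Rightarrow> real mat) \<Rightarrow> (nat \<Rightarrow> real mat) \<Rightarrow> bool" where
  "gains_work N S a mu D11 V X U Ec E F K1 K2 \<longleftrightarrow>
     (\<forall>i\<in>{1..N}. K1 i \<in> carrier_mat (dim_row (U i)) (dim_row (X i)) \<and>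
                 K2 i \<in> carrier_mat (dim_row (U i)) (dim_row S)) \<and>
     (\<forall>A B C D. (\<forall>i\<in>{1..N}. consistent_sys D11 V (X i) (U i) (Ec i) (E i) (F i) (A i) (B i) (C i) (D i)) \<longrightarrow>
        hurwitz (closed_loop_mat N S a mu (\<lambda>i. A i + B i * K1 i) (\<lambda>i. B i * K2 i)) \<and>
        (\<forall>i\<in>{1..N}. \<exists>Pi Gamma.
            Pi \<in> carrier_mat (dim_row (X i)) (dim_row S) \<and>
            Gamma \<in> carrier_mat (dim_row (U i)) (dim_row S) \<and>
            Gamma = K1 i * Pi + K2 i \<and>
            Pi * S = A i * Pi + B i * Gamma + E i \<and>
            0\<^sub>m (dim_row (Ec i)) (dim_row S) = C i * Pi + D i * Gamma + F i))"

definition informative_cor ::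
  "nat \<Rightarrow> real mat \<Rightarrow> (nat \<Rightarrow> nat \<Rightarrow> real) \<Rightarrow> real \<Rightarrow> real mat \<Rightarrow> real mat \<Rightarrow>
   (nat \<Rightarrow> real mat) \<Rightarrow> (nat \<Rightarrow> real mat) \<Rightarrow> (nat \<Rightarrow> real mat) \<Rightarrow> (nat \<Rightarrow> real mat) \<Rightarrow> (nat \<Rightarrow> real mat) \<Rightarrow> bool" where
  "informative_cor N S a mu D11 V X U Ec E F \<longleftrightarrow>
     (\<exists>Xp K2. (\<forall>i\<in>{1..N}. right_inverse (X i) (Xp i)) \<and>
        gains_work N S a mu D11 V X U Ec E F (\<lambda>i. U i * Xp i) K2)"

definition data_condition ::
  "real mat \<Rightarrow> real mat \<Rightarrow> real mat \<Rightarrow> real mat \<Rightarrow> real mat \<Rightarrow> real mat \<Rightarrow> real mat \<Rightarrow> real mat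
   \<Rightarrow> real mat \<Rightarrow> bool" where
  "data_condition S D11 V X Ec E F Xp M \<longleftrightarrow>
     right_inverse X Xp \<and>
     hurwitz ((X * D11 - E * V) * Xp) \<and>
     M \<in> carrier_mat (dim_col X) (dim_row S) \<and>
     (X * D11 - E * V) * M = X * M * S - E \<and>
     (Ec - F * V) * M = - F"

end

theory Submission
  imports Defs "Jordan_Normal_Form.Schur_Decomposition"
begin

text \<open>The closed-loop matrix is block upper triangular, so it is Hurwitz iff every follower block
  A_i + B_i K_1i and the observer matrix I \<otimes> S - mu (H \<otimes> I) are Hurwitz. With K_1i = U_i X_i^+,
  every system consistent with the data has A_i + B_i K_1i = (X_i D11 - E_i V) X_i^+, and
  Pi_i = X_i M_i, Gamma_i = U_i M_i turn a solution M_i of the data regulator equations into a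
  solution of the model ones; this gives sufficiency. For necessity, informativity is tested on one
  particular consistent system, whose input matrices are projected onto the column space of
  U_i (I - X_i^+ X_i); for it the model solution lifts to a solution M_i of the data equations.

  The threshold for mu does not depend on the unknown graph: every eigenvalue of the observer matrix
  is s - mu nu with s an eigenvalue of S and nu one of the follower Laplacian H, and a weighted
  Gershgorin argument, with weights decaying geometrically with the distance from the leader, bounds
  Re nu from below by a constant depending only on N, eps1 and eps2.\<close>

section \<open>Eigenvalues of block matrices\<close>

lemma eigenvalue_four_block_mat_lower_zero:
  fixes A :: "'a :: field mat"
  assumes A: "A \<in> carrier_mat n n" and B: "B \<in> carrier_mat n m" and D: "D \<in> carrier_mat m m"
  shows "eigenvalue (four_block_mat A B (0\<^sub>m m n) D) e \<longleftrightarrow> eigenvalue A e \<or> eigenvalue D e"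
proof -
  have M: "four_block_mat A B (0\<^sub>m m n) D \<in> carrier_mat (n + m) (n + m)"
    using A D by auto
  have "char_matrix (four_block_mat A B (0\<^sub>m m n) D) e =
        four_block_mat (char_matrix A e) B (0\<^sub>m m n) (char_matrix D e)"
    unfolding char_matrix_def by (rule eq_matI) (use A B D in auto)
  moreover have "det (four_block_mat (char_matrix A e) B (0\<^sub>m m n) (char_matrix D e)) =
                 det (char_matrix A e) * det (char_matrix D e)"
    by (rule det_four_block_mat_lower_left_zero[of _ n _ m]) (use A B D in auto)
  ultimately show ?thesis
    unfolding eigenvalue_det[OF M] eigenvalue_det[OF A] eigenvalue_det[OF D] by simp
qed

lemma eigenvalue_diag_block_mat:
  fixes As :: "'a :: field mat list"
  assumes "\<forall>A\<in>set As. square_mat A"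
  shows "eigenvalue (diag_block_mat As) e \<longleftrightarrow> (\<exists>A\<in>set As. eigenvalue A e)"
  using assms
proof (induction As)
  case Nil
  show ?case
    using eigenvalue_imp_nonzero_dim[of "0\<^sub>m 0 0 :: 'a mat" 0 e] by auto
next
  case (Cons A As)
  let ?B = "diag_block_mat As"
  have sqAs: "\<forall>A\<in>set As. square_mat A" and sqA: "dim_col A = dim_row A"
    using Cons.prems by simp_all
  have sqB: "dim_col ?B = dim_row ?B"
    using diag_block_mat_square[OF sqAs] by simp
  have B: "?B \<in> carrier_mat (dim_row ?B) (dim_row ?B)"
    using sqB unfolding carrier_mat_def by simp
  have A: "A \<in> carrier_mat (dim_row A) (dim_row A)"
    using sqA unfolding carrier_mat_def by simp
  have blocks: "diag_block_mat (A # As) =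
        four_block_mat A (0\<^sub>m (dim_row A) (dim_row ?B)) (0\<^sub>m (dim_row ?B) (dim_row A)) ?B"
    unfolding diag_block_mat.simps Let_def sqA sqB ..
  show ?case
    unfolding blocks eigenvalue_four_block_mat_lower_zero[OF A zero_carrier_mat B] Cons.IH[OF sqAs]
    by simp
qed

lemma map_mat_diag_block_mat:
  assumes "f 0 = 0"
  shows "map_mat f (diag_block_mat As) = diag_block_mat (map (map_mat f) As)"
proof (induction As)
  case Nil
  show ?case by (rule eq_matI) auto
next
  case (Cons A As)
  let ?B = "diag_block_mat As"
  have "map_mat f (diag_block_mat (A # As)) =
        four_block_mat (map_mat f A) (0\<^sub>m (dim_row A) (dim_col ?B))
          (0\<^sub>m (dim_row ?B) (dim_col A)) (map_mat f ?B)"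
    unfolding diag_block_mat.simps Let_def by (rule eq_matI) (auto simp: assms)
  then show ?case
    by (simp add: Cons.IH Let_def dim_diag_block_mat o_def)
qed

lemma diag_block_mat_carrier:
  assumes "\<forall>x\<in>set xs. f x \<in> carrier_mat (r x) (c x)"
  shows "diag_block_mat (map f xs) \<in> carrier_mat (\<Sum>x\<leftarrow>xs. r x) (\<Sum>x\<leftarrow>xs. c x)"
  using assms by (induction xs) (auto simp: Let_def)

section \<open>Spectral bounds\<close>

lemma finite_maximizer:
  fixes f :: "'a \<Rightarrow> 'b :: linorder"
  assumes "finite A" "A \<noteq> {}"
  obtains x where "x \<in> A" "\<And>y. y \<in> A \<Longrightarrow> f y \<le> f x"
proof -
  have "Max (f ` A) \<in> f ` A"
    using assms by simp
  then obtain x where "x \<in> A" "f x = Max (f ` A)"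
    by auto
  then show ?thesis
    using that[of x] assms by simp
qed

lemma nonzero_vec_entry:
  assumes "v \<in> carrier_vec n" "v \<noteq> 0\<^sub>v n"
  shows "\<exists>i<n. v $ i \<noteq> 0"
proof (rule ccontr)
  assume "\<not> ?thesis"
  then have "v = 0\<^sub>v n"
    using assms(1) by (intro eq_vecI) auto
  with assms(2) show False
    by simp
qed

lemma eigenvalue_norm_le_sum_abs_entries:
  fixes S :: "real mat"
  assumes S: "S \<in> carrier_mat q q" and ev: "eigenvalue (map_mat complex_of_real S) s"
  shows "cmod s \<le> (\<Sum>x<q. \<Sum>y<q. \<bar>S $$ (x, y)\<bar>)"
proof -
  obtain w where "eigenvector (map_mat complex_of_real S) w s"
    using ev unfolding eigenvalue_def by blast
  then have w: "w \<in> carrier_vec q" "w \<noteq> 0\<^sub>v q"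
    and eq: "map_mat complex_of_real S *\<^sub>v w = s \<cdot>\<^sub>v w"
    using S unfolding eigenvector_def by auto
  obtain x where x: "x \<in> {..<q}" and xmax: "\<And>y. y \<in> {..<q} \<Longrightarrow> cmod (w $ y) \<le> cmod (w $ x)"
    using finite_maximizer[of "{..<q}" "\<lambda>y. cmod (w $ y)"] nonzero_vec_entry[OF w] by blast
  have wx: "0 < cmod (w $ x)"
    using nonzero_vec_entry[OF w] xmax by (metis lessThan_iff norm_le_zero_iff not_less order.trans)
  have "cmod s * cmod (w $ x) = cmod (\<Sum>y<q. complex_of_real (S $$ (x, y)) * w $ y)"
    using arg_cong[OF eq, of "\<lambda>v. v $ x"] x S w
    by (simp add: scalar_prod_def atLeast0LessThan norm_mult)
  also have "\<dots> \<le> (\<Sum>y<q. \<bar>S $$ (x, y)\<bar> * cmod (w $ y))"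
    by (rule order.trans[OF norm_sum]) (simp add: norm_mult)
  also have "\<dots> \<le> (\<Sum>y<q. \<bar>S $$ (x, y)\<bar>) * cmod (w $ x)"
    unfolding sum_distrib_right by (intro sum_mono mult_left_mono xmax) auto
  also have "\<dots> \<le> (\<Sum>x<q. \<Sum>y<q. \<bar>S $$ (x, y)\<bar>) * cmod (w $ x)"
    using x by (intro mult_right_mono member_le_sum sum_nonneg) auto
  finally show ?thesis
    using wx by simp
qed

text \<open>A weighted Gershgorin argument, at an index maximising |u i| / d i for an eigenvector u.\<close>
lemma eigenvalue_Re_ge_weighted_row_sums:
  fixes H :: "real mat" and d :: "nat \<Rightarrow> real"
  assumes H: "H \<in> carrier_mat n n"
    and offdiag: "\<And>i j. i < n \<Longrightarrow> j < n \<Longrightarrow> i \<noteq> j \<Longrightarrow> H $$ (i, j) \<le> 0"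
    and d: "\<And>i. i < n \<Longrightarrow> 0 < d i"
    and rows: "\<And>i. i < n \<Longrightarrow> c * d i \<le> (\<Sum>j<n. H $$ (i, j) * d j)"
    and ev: "eigenvalue (map_mat complex_of_real H) \<nu>"
  shows "c \<le> Re \<nu>"
proof -
  obtain u where "eigenvector (map_mat complex_of_real H) u \<nu>"
    using ev unfolding eigenvalue_def by blast
  then have u: "u \<in> carrier_vec n" "u \<noteq> 0\<^sub>v n"
    and eq: "map_mat complex_of_real H *\<^sub>v u = \<nu> \<cdot>\<^sub>v u"
    using H unfolding eigenvector_def by auto
  define g where "g j = cmod (u $ j) / d j" for j
  obtain i where i: "i \<in> {..<n}" and imax: "\<And>j. j \<in> {..<n} \<Longrightarrow> g j \<le> g i"
    using finite_maximizer[of "{..<n}" g] nonzero_vec_entry[OF u] by blast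
  have gi: "0 < g i"
  proof -
    obtain j where "j < n" "u $ j \<noteq> 0" using nonzero_vec_entry[OF u] by blast
    then have "0 < g j" using d unfolding g_def by simp
    then show ?thesis using imax \<open>j < n\<close> by fastforce
  qed
  let ?off = "{..<n} - {i}"
  define D where "D = (\<Sum>j\<in>?off. H $$ (i, j) * d j)"
  have row_i: "(\<Sum>j<n. H $$ (i, j) * d j) = H $$ (i, i) * d i + D"
    unfolding D_def using i by (simp add: sum.remove)
  have "\<nu> * u $ i = (\<Sum>j<n. complex_of_real (H $$ (i, j)) * u $ j)"
    using arg_cong[OF eq, of "\<lambda>v. v $ i"] i H u by (simp add: scalar_prod_def atLeast0LessThan)
  then have "(\<nu> - complex_of_real (H $$ (i, i))) * u $ i = (\<Sum>j\<in>?off. complex_of_real (H $$ (i, j)) * u $ j)"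
    using i by (simp add: sum.remove algebra_simps)
  then have "cmod (\<nu> - H $$ (i, i)) * cmod (u $ i) \<le> (\<Sum>j\<in>?off. cmod (complex_of_real (H $$ (i, j)) * u $ j))"
    by (metis norm_mult norm_sum)
  also have "\<dots> = (\<Sum>j\<in>?off. - H $$ (i, j) * cmod (u $ j))"
    using i offdiag by (intro sum.cong) (auto simp: norm_mult)
  also have "\<dots> \<le> (\<Sum>j\<in>?off. - H $$ (i, j) * (g i * d j))"
  proof (intro sum_mono mult_left_mono)
    fix j assume "j \<in> ?off"
    then show "cmod (u $ j) \<le> g i * d j" and "0 \<le> - H $$ (i, j)"
      using imax[of j] d[of j] offdiag[of i j] i by (auto simp: g_def divide_le_eq)
  qed
  also have "\<dots> = g i * - D"
    unfolding D_def by (simp add: sum_distrib_left sum_negf mult.left_commute)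
  finally have "g i * (cmod (\<nu> - H $$ (i, i)) * d i) \<le> g i * - D"
    using d[of i] i by (simp add: g_def ac_simps)
  then have dev: "cmod (\<nu> - H $$ (i, i)) * d i \<le> - D"
    using gi mult_le_cancel_left_pos by blast
  have "H $$ (i, i) - cmod (\<nu> - H $$ (i, i)) \<le> Re \<nu>"
    using abs_Re_le_cmod[of "\<nu> - H $$ (i, i)"] by simp
  then have "(H $$ (i, i) - cmod (\<nu> - H $$ (i, i))) * d i \<le> Re \<nu> * d i"
    using d[of i] i by (simp add: mult_right_mono)
  then have "c * d i \<le> Re \<nu> * d i"
    using rows[of i] i dev unfolding row_i left_diff_distrib by auto
  then show ?thesis
    using d[of i] i by simp
qed

lemma eigenvalue_smult_one_add_smult:
  fixes A :: "'a :: field mat"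
  assumes A: "A \<in> carrier_mat n n" and d: "d \<noteq> 0" and ev: "eigenvalue (c \<cdot>\<^sub>m 1\<^sub>m n + d \<cdot>\<^sub>m A) s"
  shows "eigenvalue A ((s - c) / d)"
proof -
  obtain v where "eigenvector (c \<cdot>\<^sub>m 1\<^sub>m n + d \<cdot>\<^sub>m A) v s"
    using ev unfolding eigenvalue_def by blast
  then have v: "v \<in> carrier_vec n" "v \<noteq> 0\<^sub>v n" and eq: "(c \<cdot>\<^sub>m 1\<^sub>m n + d \<cdot>\<^sub>m A) *\<^sub>v v = s \<cdot>\<^sub>v v"
    using A unfolding eigenvector_def by auto
  have "A *\<^sub>v v = ((s - c) / d) \<cdot>\<^sub>v v"
  proof (rule eq_vecI)
    fix i assume "i < dim_vec (((s - c) / d) \<cdot>\<^sub>v v)"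
    then have i: "i < n"
      using v by simp
    have "s * v $ i = (\<Sum>j<n. (c * (if j = i then 1 else 0) + d * A $$ (i, j)) * v $ j)"
      using arg_cong[OF eq, of "\<lambda>w. w $ i"] i v A by (simp add: scalar_prod_def atLeast0LessThan)
    also have "\<dots> = (\<Sum>j<n. (if j = i then c * v $ j else 0) + d * (A $$ (i, j) * v $ j))"
      by (intro sum.cong refl) (auto simp: algebra_simps)
    also have "\<dots> = c * v $ i + d * (A *\<^sub>v v) $ i"
      using i v A by (simp add: sum.distrib sum_distrib_left scalar_prod_def atLeast0LessThan)
    finally show "(A *\<^sub>v v) $ i = (((s - c) / d) \<cdot>\<^sub>v v) $ i"
      using d i v by (simp add: field_simps)
  qed (use A v in simp)
  then show ?thesis
    unfolding eigenvalue_def eigenvector_def using A v by auto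
qed

lemma upper_triangular_intertwining_eigenvalue:
  fixes T W K :: "'a :: field mat"
  assumes T: "T \<in> carrier_mat q q" and ut: "upper_triangular T" and W: "W \<in> carrier_mat q n"
    and K: "K \<in> carrier_mat n n" and W0: "W \<noteq> 0\<^sub>m q n" and TW: "T * W = W * K"
  shows "\<exists>k<q. eigenvalue (transpose_mat K) (T $$ (k, k))"
proof -
  \<comment> \<open>The last nonzero row of W is a left eigenvector of K.\<close>
  have "\<exists>x<q. \<exists>i<n. W $$ (x, i) \<noteq> 0"
    using W W0 by (metis eq_matI carrier_matD index_zero_mat(1,2,3))
  define Rows where "Rows = {x. x < q \<and> (\<exists>i<n. W $$ (x, i) \<noteq> 0)}"
  define k where "k = Max Rows"
  have Rows: "finite Rows" "Rows \<noteq> {}"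
    using \<open>\<exists>x<q. _\<close> unfolding Rows_def by auto
  have k: "k < q" and k_nz: "\<exists>i<n. W $$ (k, i) \<noteq> 0"
    using Max_in[OF Rows] unfolding k_def Rows_def by auto
  have below_zero: "W $$ (x, i) = 0" if "x < q" "k < x" "i < n" for x i
  proof (rule ccontr)
    assume "W $$ (x, i) \<noteq> 0"
    then have "x \<in> Rows"
      using that unfolding Rows_def by auto
    then show False
      using Max_ge[OF Rows(1), of x] that unfolding k_def by simp
  qed
  define u where "u = row W k"
  have u: "u \<in> carrier_vec n" "u \<noteq> 0\<^sub>v n"
    using k_nz W k unfolding u_def by (auto simp: vec_eq_iff)
  have "transpose_mat K *\<^sub>v u = T $$ (k, k) \<cdot>\<^sub>v u"
  proof (rule eq_vecI)
    fix i assume "i < dim_vec (T $$ (k, k) \<cdot>\<^sub>v u)"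
    then have i: "i < n" using u by simp
    have "(T * W) $$ (k, i) = (\<Sum>z<q. T $$ (k, z) * W $$ (z, i))"
      using T W k i by (simp add: scalar_prod_def atLeast0LessThan)
    also have "\<dots> = T $$ (k, k) * W $$ (k, i) + (\<Sum>z\<in>{..<q} - {k}. T $$ (k, z) * W $$ (z, i))"
      using k by (simp add: sum.remove)
    also have "(\<Sum>z\<in>{..<q} - {k}. T $$ (k, z) * W $$ (z, i)) = 0"
    proof (rule sum.neutral, rule ballI)
      fix z assume "z \<in> {..<q} - {k}"
      then show "T $$ (k, z) * W $$ (z, i) = 0"
        using ut T below_zero[of z i] i k unfolding upper_triangular_def
        by (cases "z < k") auto
    qed
    finally show "(transpose_mat K *\<^sub>v u) $ i = (T $$ (k, k) \<cdot>\<^sub>v u) $ i"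
      using TW W K k i unfolding u_def by (simp add: comm_scalar_prod[of _ n])
  qed (use u K in simp)
  then show ?thesis
    unfolding eigenvalue_def eigenvector_def using u K k by auto
qed

lemma intertwined_mats_common_eigenvalue:
  fixes A W K :: "complex mat"
  assumes A: "A \<in> carrier_mat q q" and W: "W \<in> carrier_mat q n" and K: "K \<in> carrier_mat n n"
    and W0: "W \<noteq> 0\<^sub>m q n" and AW: "A * W = W * K"
  shows "\<exists>s. eigenvalue A s \<and> eigenvalue (transpose_mat K) s"
proof -
  obtain es where es: "char_poly A = (\<Prod>e\<leftarrow>es. [:- e, 1:])"
    using char_poly_factorized[OF A] by blast
  obtain T P Q where "schur_decomposition A es = (T, P, Q)"
    by (metis prod_cases3)
  from schur_decomposition[OF A es this]
  have sim: "similar_mat_wit A T P Q" and ut: "upper_triangular T" and dg: "diag_mat T = es"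
    by auto
  then have T: "T \<in> carrier_mat q q" and P: "P \<in> carrier_mat q q" and Q: "Q \<in> carrier_mat q q"
    and QP: "Q * P = 1\<^sub>m q" and PQ: "P * Q = 1\<^sub>m q" and APTQ: "A = P * T * Q"
    using A unfolding similar_mat_wit_def Let_def by auto
  have QW: "Q * W \<in> carrier_mat q n"
    using Q W by simp
  have "T * (Q * W) = (Q * P) * T * Q * W"
    unfolding QP using T Q W by simp
  also have "\<dots> = Q * (A * W)"
    unfolding APTQ using T P Q W by (simp add: assoc_mult_mat[of _ q q _ q _ n])
  finally have TQW: "T * (Q * W) = (Q * W) * K"
    unfolding AW using Q W K by simp
  have "Q * W \<noteq> 0\<^sub>m q n"
  proof
    assume "Q * W = 0\<^sub>m q n"
    then have "P * (Q * W) = 0\<^sub>m q n" using P by simp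
    moreover have "P * (Q * W) = W"
      using P Q W by (simp add: assoc_mult_mat[symmetric, of _ q q _ q _ n] PQ)
    ultimately show False using W0 by simp
  qed
  then obtain k where k: "k < q" "eigenvalue (transpose_mat K) (T $$ (k, k))"
    using upper_triangular_intertwining_eigenvalue[OF T ut QW K _ TQW] by blast
  have "T $$ (k, k) \<in> set es"
    unfolding dg[symmetric] diag_mat_def using k T by simp
  then have "eigenvalue A (T $$ (k, k))"
    unfolding eigenvalue_root_char_poly[OF A] es by (rule linear_poly_root)
  then show ?thesis
    using k by blast
qed

section \<open>The follower Laplacian of an admissible graph\<close>

definition leader_dist :: "nat \<Rightarrow> (nat \<Rightarrow> nat \<Rightarrow> real) \<Rightarrow> nat \<Rightarrow> nat" where
  "leader_dist N a i = (LEAST k. (0, i) \<in> graph_edges N a ^^ k)"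

lemma card_graph_edges_le: "card (graph_edges N a) \<le> (Suc N)\<^sup>2"
proof -
  have "graph_edges N a \<subseteq> {0..N} \<times> {0..N}"
    unfolding graph_edges_def by auto
  then have "card (graph_edges N a) \<le> card ({0..N} \<times> {0..N})"
    by (intro card_mono) auto
  then show ?thesis
    by (simp add: card_cartesian_product power2_eq_square)
qed

lemma leader_dist_path:
  assumes "(0, i) \<in> (graph_edges N a)\<^sup>*"
  shows "(0, i) \<in> graph_edges N a ^^ leader_dist N a i" "leader_dist N a i \<le> (Suc N)\<^sup>2"
proof -
  have "finite (graph_edges N a)"
    by (rule finite_subset[of _ "{0..N} \<times> {0..N}"]) (auto simp: graph_edges_def)
  then have "(0, i) \<in> (\<Union>k\<in>{k. k \<le> card (graph_edges N a)}. graph_edges N a ^^ k)"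
    using assms by (simp only: rtrancl_finite_eq_relpow)
  then obtain k where k: "k \<le> card (graph_edges N a)" "(0, i) \<in> graph_edges N a ^^ k"
    by blast
  show "(0, i) \<in> graph_edges N a ^^ leader_dist N a i"
    using k(2) unfolding leader_dist_def by (rule LeastI)
  have "leader_dist N a i \<le> k"
    unfolding leader_dist_def using k(2) by (rule Least_le)
  then show "leader_dist N a i \<le> (Suc N)\<^sup>2"
    using k(1) card_graph_edges_le[of N a] by linarith
qed

lemma leader_dist_leader [simp]: "leader_dist N a 0 = 0"
  unfolding leader_dist_def by (rule Least_eq_0) simp

lemma leader_dist_parent:
  assumes "(0, i) \<in> (graph_edges N a)\<^sup>*" "i \<in> {1..N}"
  obtains l p where "leader_dist N a i = Suc l" "p \<in> {0..N}" "a i p \<noteq> 0" "leader_dist N a p \<le> l"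
proof -
  note path = leader_dist_path(1)[OF assms(1)]
  obtain l where l: "leader_dist N a i = Suc l"
    using path assms(2) by (cases "leader_dist N a i") auto
  then obtain p where "(0, p) \<in> graph_edges N a ^^ l" "(p, i) \<in> graph_edges N a"
    using path by (auto elim: relpow_Suc_E)
  moreover from this(1) have "leader_dist N a p \<le> l"
    unfolding leader_dist_def by (rule Least_le)
  ultimately show ?thesis
    using that l unfolding graph_edges_def by blast
qed

lemma admissible_graphD:
  assumes "admissible_graph N e1 e2 a" "i \<in> {0..N}"
  shows "\<And>j. j \<in> {0..N} \<Longrightarrow> 0 \<le> a i j" "a i i = 0" "(0, i) \<in> (graph_edges N a)\<^sup>*"
    "\<And>j. j \<in> {0..N} \<Longrightarrow> laplacian N a i j \<noteq> 0 \<Longrightarrow>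
       e1 \<le> \<bar>laplacian N a i j\<bar> \<and> \<bar>laplacian N a i j\<bar> \<le> e2"
  using assms unfolding admissible_graph_def by blast+

lemma admissible_graph_weight_bounds:
  assumes "admissible_graph N e1 e2 a" "i \<in> {0..N}" "j \<in> {0..N}" "a i j \<noteq> 0"
  shows "e1 \<le> a i j" "a i j \<le> e2"
proof -
  have "i \<noteq> j" "0 \<le> a i j"
    using admissible_graphD(1,2)[OF assms(1,2)] assms(3,4) by auto
  then have "\<bar>laplacian N a i j\<bar> = a i j" "laplacian N a i j \<noteq> 0"
    using assms(4) unfolding laplacian_def by auto
  then show "e1 \<le> a i j" "a i j \<le> e2"
    using admissible_graphD(4)[OF assms(1-3)] by simp_all
qed

definition laplacian_margin :: "nat \<Rightarrow> real \<Rightarrow> real \<Rightarrow> real" where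
  "laplacian_margin N e1 e2 = (e1 / (2 * (e1 + N * e2))) ^ (Suc N)\<^sup>2 * e1 / 2"

lemma laplacian_margin_pos: "0 < e1 \<Longrightarrow> e1 \<le> e2 \<Longrightarrow> 0 < laplacian_margin N e1 e2"
  unfolding laplacian_margin_def by (simp add: add_pos_nonneg)

text \<open>With weights r ^ k decaying geometrically along the distance k from the leader, the edge to a
  parent closer to the leader outweighs all other edges as soon as r (e1 + N e2) \<le> e1 / 2.\<close>
lemma admissible_graph_margin:
  assumes adm: "admissible_graph N e1 e2 a" and e: "0 < e1" "e1 \<le> e2" and i: "i \<in> {1..N}"
  defines "r \<equiv> e1 / (2 * (e1 + N * e2))"
  shows "laplacian_margin N e1 e2 \<le> (\<Sum>k\<in>{0..N}-{i}. a i k * (r ^ leader_dist N a k - r ^ leader_dist N a i))"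
proof -
  have pos: "0 < e1 + N * e2"
    using e by (simp add: add_pos_nonneg)
  then have r: "0 < r" "r \<le> 1" and r_eq: "r * (e1 + N * e2) = e1 / 2"
    using e unfolding r_def by (auto simp: field_simps)
  have reach: "(0, i) \<in> (graph_edges N a)\<^sup>*"
    using i by (auto intro: admissible_graphD(3)[OF adm])
  obtain l p where l: "leader_dist N a i = Suc l"
    and p: "p \<in> {0..N}" "a i p \<noteq> 0" "leader_dist N a p \<le> l"
    using leader_dist_parent[OF reach i] .
  have "p \<noteq> i"
    using p(2) admissible_graphD(2)[OF adm, of i] i by auto
  have nonneg: "0 \<le> a i k" if "k \<in> {0..N}" for k
    using admissible_graphD(1)[OF adm _ that, of i] i by simp
  have le_e2: "a i k \<le> e2" if "k \<in> {0..N}" for k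
    using admissible_graph_weight_bounds(2)[OF adm _ that] i e by (cases "a i k = 0") auto
  define f where "f k = a i k * (r ^ leader_dist N a k - r ^ leader_dist N a i)" for k
  have parent: "e1 * (r ^ l - r ^ Suc l) \<le> f p"
  proof -
    have "r ^ l \<le> r ^ leader_dist N a p"
      using p(3) r by (simp add: power_decreasing)
    moreover have "r ^ Suc l \<le> r ^ l"
      using r by (simp add: power_decreasing)
    ultimately show ?thesis
      unfolding f_def l using admissible_graph_weight_bounds(1)[OF adm _ p(1,2)] i e
      by (intro mult_mono) auto
  qed
  have others: "- (e2 * r ^ Suc l) \<le> f k" if "k \<in> {0..N}-{i}-{p}" for k
  proof -
    have "a i k * r ^ Suc l \<le> e2 * r ^ Suc l"
      using le_e2[of k] that r by (intro mult_right_mono) auto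
    moreover have "0 \<le> a i k * r ^ leader_dist N a k"
      using nonneg[of k] that r by simp
    ultimately show ?thesis
      unfolding f_def l by (simp add: algebra_simps)
  qed
  have "card ({0..N}-{i}-{p}) \<le> N"
    using i card_Diff1_le[of "{0..N}-{i}" p] by (simp add: card_Diff_singleton)
  then have "- (N * (e2 * r ^ Suc l)) \<le> card ({0..N}-{i}-{p}) * - (e2 * r ^ Suc l)"
    using e r by (simp add: mult_right_mono)
  also have "\<dots> \<le> (\<Sum>k\<in>{0..N}-{i}-{p}. f k)"
    using others by (rule sum_bounded_below)
  finally have "- (N * (e2 * r ^ Suc l)) \<le> (\<Sum>k\<in>{0..N}-{i}-{p}. f k)" .
  moreover have "e1 * (r ^ l - r ^ Suc l) - N * (e2 * r ^ Suc l) = r ^ l * (e1 - r * (e1 + N * e2))"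
    by (simp add: algebra_simps)
  moreover have "r ^ l * (e1 - r * (e1 + N * e2)) = r ^ l * (e1 / 2)"
    unfolding r_eq by simp
  moreover have "laplacian_margin N e1 e2 \<le> r ^ l * (e1 / 2)"
  proof -
    have "l \<le> (Suc N)\<^sup>2"
      using leader_dist_path(2)[OF reach] l by simp
    then have "r ^ (Suc N)\<^sup>2 \<le> r ^ l"
      using r by (simp add: power_decreasing)
    then show ?thesis
      unfolding laplacian_margin_def r_def[symmetric] using e by simp
  qed
  moreover have "(\<Sum>k\<in>{0..N}-{i}. f k) = f p + (\<Sum>k\<in>{0..N}-{i}-{p}. f k)"
    using p(1) \<open>p \<noteq> i\<close> by (intro sum.remove) auto
  ultimately show ?thesis
    using parent unfolding f_def by linarith
qed

definition follower_laplacian :: "nat \<Rightarrow> (nat \<Rightarrow> nat \<Rightarrow> real) \<Rightarrow> real mat" where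
  "follower_laplacian N a = mat N N (\<lambda>(i, j). laplacian N a (Suc i) (Suc j))"

lemma laplacian_weighted_row_sum:
  assumes i: "i \<in> {1..N}" and d0: "d 0 = 0"
  shows "(\<Sum>j\<in>{1..N}. laplacian N a i j * d j) = (\<Sum>k\<in>{0..N}-{i}. a i k * (d i - d k))"
proof -
  have "(\<Sum>j\<in>{1..N}. laplacian N a i j * d j)
        = laplacian N a i i * d i + (\<Sum>j\<in>{1..N}-{i}. laplacian N a i j * d j)"
    using i by (simp add: sum.remove)
  also have "(\<Sum>j\<in>{1..N}-{i}. laplacian N a i j * d j) = - (\<Sum>j\<in>{1..N}-{i}. a i j * d j)"
    by (simp add: laplacian_def sum_negf[symmetric])
  also have "(\<Sum>j\<in>{1..N}-{i}. a i j * d j) = (\<Sum>k\<in>{0..N}-{i}. a i k * d k)"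
  proof -
    have "{0..N}-{i} = insert 0 ({1..N}-{i})"
      using i by auto
    then show ?thesis using d0 by simp
  qed
  also have "laplacian N a i i * d i = (\<Sum>k\<in>{0..N}-{i}. a i k * d i)"
    by (simp add: laplacian_def sum_distrib_right)
  finally show ?thesis
    by (simp add: sum_subtractf right_diff_distrib)
qed

lemma follower_laplacian_eigenvalue_Re_ge:
  assumes adm: "admissible_graph N e1 e2 a" and e: "0 < e1" "e1 \<le> e2"
    and ev: "eigenvalue (map_mat complex_of_real (follower_laplacian N a)) \<nu>"
  shows "laplacian_margin N e1 e2 \<le> Re \<nu>"
proof -
  define r where "r = e1 / (2 * (e1 + N * e2))"
  have "0 \<le> N * e2"
    using e by simp
  then have "e1 < 2 * e1 + 2 * (N * e2)"
    using e by linarith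
  then have "e1 < 2 * (e1 + N * e2)"
    by (simp only: distrib_left)
  then have r: "0 < r" "r < 1"
    using e unfolding r_def by simp_all
  define d where "d k = 1 - r ^ leader_dist N a k" for k
  have d_pos: "0 < d (Suc j) \<and> d (Suc j) \<le> 1" if j: "j < N" for j
  proof -
    have "(0, Suc j) \<in> (graph_edges N a)\<^sup>*" "Suc j \<in> {1..N}"
      using admissible_graphD(3)[OF adm, of "Suc j"] j by simp_all
    then obtain l where "leader_dist N a (Suc j) = Suc l"
      using leader_dist_parent by blast
    then show ?thesis
      using r power_Suc_less_one[of r l] unfolding d_def by simp
  qed
  show ?thesis
  proof (rule eigenvalue_Re_ge_weighted_row_sums[OF _ _ _ _ ev, where d = "\<lambda>j. d (Suc j)"])
    show "follower_laplacian N a \<in> carrier_mat N N"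
      unfolding follower_laplacian_def by simp
    show "follower_laplacian N a $$ (i, j) \<le> 0" if "i < N" "j < N" "i \<noteq> j" for i j
      using that admissible_graphD(1)[OF adm, of "Suc i" "Suc j"]
      unfolding follower_laplacian_def laplacian_def by simp
    show "0 < d (Suc j)" if "j < N" for j
      using d_pos[OF that] by simp
    show "laplacian_margin N e1 e2 * d (Suc i) \<le> (\<Sum>j<N. follower_laplacian N a $$ (i, j) * d (Suc j))"
      if "i < N" for i
    proof -
      have "laplacian_margin N e1 e2 * d (Suc i) \<le> laplacian_margin N e1 e2"
        using d_pos[OF that] laplacian_margin_pos[OF e] by (simp add: mult_left_le)
      also have "\<dots> \<le> (\<Sum>k\<in>{0..N}-{Suc i}. a (Suc i) k * (d (Suc i) - d k))"
        using admissible_graph_margin[OF adm e, of "Suc i"] that unfolding d_def r_def by simp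
      also have "\<dots> = (\<Sum>j\<in>{1..N}. laplacian N a (Suc i) j * d j)"
        using that by (intro laplacian_weighted_row_sum[symmetric]) (auto simp: d_def)
      also have "\<dots> = (\<Sum>j<N. follower_laplacian N a $$ (i, j) * d (Suc j))"
        using that by (simp add: sum.atLeast1_atMost_eq follower_laplacian_def)
      finally show ?thesis .
    qed
  qed
qed

section \<open>The observer matrix\<close>

lemma block_index_less: "i < N \<Longrightarrow> x < q \<Longrightarrow> i * q + x < N * (q :: nat)"
proof -
  assume "i < N" "x < q"
  then have "i * q + x < Suc i * q" by simp
  also have "\<dots> \<le> N * q" using \<open>i < N\<close> by (intro mult_right_mono) auto
  finally show ?thesis .
qed

lemma sum_blocks:
  fixes g :: "nat \<Rightarrow> 'a :: comm_monoid_add"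
  shows "(\<Sum>c<N * q. g c) = (\<Sum>i<N. \<Sum>x<q. g (i * q + x))"
proof -
  have "sum g {i * q..<i * q + q} = (\<Sum>x<q. g (i * q + x))" for i
    using sum.shift_bounds_nat_ivl[of g 0 "i * q" q] by (simp add: atLeast0LessThan add.commute)
  then show ?thesis
    using sum.nat_group[of g q N] by (simp add: mult.commute)
qed

lemma observer_mat_carrier:
  "S \<in> carrier_mat q q \<Longrightarrow> observer_mat N S a mu \<in> carrier_mat (N * q) (N * q)"
  unfolding observer_mat_def Let_def by simp

lemma observer_mat_dim:
  assumes "S \<in> carrier_mat q q"
  shows "dim_row (observer_mat N S a mu) = N * q" "dim_col (observer_mat N S a mu) = N * q"
  using observer_mat_carrier[OF assms] by auto

lemma observer_mat_block_index:
  assumes S: "S \<in> carrier_mat q q" and i: "i < N" "j < N" and x: "x < q" "y < q"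
  shows "observer_mat N S a mu $$ (i * q + x, j * q + y) =
     (if i = j then S $$ (x, y) else 0) - mu * follower_laplacian N a $$ (i, j) * (if x = y then 1 else 0)"
proof -
  have "(i * q + x) div q = i" "(i * q + x) mod q = x" "(j * q + y) div q = j" "(j * q + y) mod q = y"
    using x by auto
  then show ?thesis
    using S i x block_index_less[OF i(1) x(1)] block_index_less[OF i(2) x(2)]
    unfolding observer_mat_def follower_laplacian_def Let_def by simp
qed

lemma observer_mat_mult_vec_index:
  assumes S: "S \<in> carrier_mat q q" and v: "v \<in> carrier_vec (N * q)" and i: "i < N" and x: "x < q"
  shows "(map_mat complex_of_real (observer_mat N S a mu) *\<^sub>v v) $ (i * q + x) =
     (\<Sum>y<q. complex_of_real (S $$ (x, y)) * v $ (i * q + y))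
     - complex_of_real mu * (\<Sum>j<N. complex_of_real (follower_laplacian N a $$ (i, j)) * v $ (j * q + x))"
proof -
  let ?O = "\<lambda>c. complex_of_real (observer_mat N S a mu $$ (i * q + x, c))"
  let ?H = "\<lambda>j. complex_of_real mu * complex_of_real (follower_laplacian N a $$ (i, j))"
  have block: "(\<Sum>y<q. ?O (j * q + y) * v $ (j * q + y)) =
      (if i = j then \<Sum>y<q. complex_of_real (S $$ (x, y)) * v $ (i * q + y) else 0) - ?H j * v $ (j * q + x)"
    if j: "j < N" for j
  proof -
    have "(\<Sum>y<q. ?O (j * q + y) * v $ (j * q + y)) =
        (\<Sum>y<q. (if i = j then complex_of_real (S $$ (x, y)) * v $ (j * q + y) else 0)
                 - (if y = x then ?H j * v $ (j * q + y) else 0))"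
      using S i j x by (intro sum.cong refl) (auto simp: observer_mat_block_index left_diff_distrib)
    also have "\<dots> = (if i = j then \<Sum>y<q. complex_of_real (S $$ (x, y)) * v $ (i * q + y) else 0)
                     - ?H j * v $ (j * q + x)"
      using x by (cases "i = j") (simp_all add: sum_subtractf sum_negf)
    finally show ?thesis .
  qed
  have "(map_mat complex_of_real (observer_mat N S a mu) *\<^sub>v v) $ (i * q + x) = (\<Sum>c<N * q. ?O c * v $ c)"
    using v S block_index_less[OF i x] by (simp add: observer_mat_dim scalar_prod_def atLeast0LessThan)
  also have "\<dots> = (\<Sum>j<N. (if i = j then \<Sum>y<q. complex_of_real (S $$ (x, y)) * v $ (i * q + y) else 0)
                     - ?H j * v $ (j * q + x))"
    unfolding sum_blocks using block by simp
  also have "\<dots> = (\<Sum>y<q. complex_of_real (S $$ (x, y)) * v $ (i * q + y)) - (\<Sum>j<N. ?H j * v $ (j * q + x))"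
    using i by (simp add: sum_subtractf)
  finally show ?thesis
    by (simp add: sum_distrib_left mult.assoc)
qed

text \<open>Reshaping an eigenvector of I \<otimes> S - mu (H \<otimes> I) into the q \<times> N matrix W of its blocks turns
  the eigen-equation into S W = W (lam I + mu H^T).\<close>
lemma observer_eigenvector_intertwines:
  assumes S: "S \<in> carrier_mat q q" and v: "v \<in> carrier_vec (N * q)"
    and ev: "map_mat complex_of_real (observer_mat N S a mu) *\<^sub>v v = lam \<cdot>\<^sub>v v"
  defines "W \<equiv> mat q N (\<lambda>(x, i). v $ (i * q + x))"
    and "K \<equiv> lam \<cdot>\<^sub>m 1\<^sub>m N + complex_of_real mu \<cdot>\<^sub>m transpose_mat (map_mat complex_of_real (follower_laplacian N a))"
  shows "map_mat complex_of_real S * W = W * K"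
proof (rule eq_matI)
  fix x i assume "x < dim_row (W * K)" "i < dim_col (W * K)"
  then have x: "x < q" and i: "i < N"
    unfolding W_def K_def by (auto simp: follower_laplacian_def)
  let ?Hv = "\<Sum>j<N. complex_of_real (follower_laplacian N a $$ (i, j)) * v $ (j * q + x)"
  have "(W * K) $$ (x, i) = (\<Sum>j<N. v $ (j * q + x) * (lam * (if j = i then 1 else 0)
      + complex_of_real mu * complex_of_real (follower_laplacian N a $$ (i, j))))"
    using x i unfolding W_def K_def by (simp add: scalar_prod_def atLeast0LessThan follower_laplacian_def)
  also have "\<dots> = (\<Sum>j<N. (if j = i then lam * v $ (j * q + x) else 0)
      + complex_of_real mu * (complex_of_real (follower_laplacian N a $$ (i, j)) * v $ (j * q + x)))"
    by (intro sum.cong refl) (simp add: algebra_simps)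
  also have "\<dots> = lam * v $ (i * q + x) + complex_of_real mu * ?Hv"
    using i by (simp add: sum.distrib sum_distrib_left)
  also have "lam * v $ (i * q + x) = (\<Sum>y<q. complex_of_real (S $$ (x, y)) * v $ (i * q + y))
                                     - complex_of_real mu * ?Hv"
    using arg_cong[OF ev, of "\<lambda>w. w $ (i * q + x)"] observer_mat_mult_vec_index[OF S v i x]
      block_index_less[OF i x] v by simp
  finally show "(map_mat complex_of_real S * W) $$ (x, i) = (W * K) $$ (x, i)"
    using x i S unfolding W_def by (simp add: scalar_prod_def atLeast0LessThan)
qed (use S in \<open>auto simp: W_def K_def follower_laplacian_def\<close>)

lemma observer_mat_eigenvalue:
  assumes S: "S \<in> carrier_mat q q" and mu: "mu \<noteq> 0"
    and ev: "eigenvalue (map_mat complex_of_real (observer_mat N S a mu)) lam"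
  obtains s \<nu> :: complex where "eigenvalue (map_mat complex_of_real S) s"
    "eigenvalue (map_mat complex_of_real (follower_laplacian N a)) \<nu>" "lam = s - mu * \<nu>"
proof -
  define H where "H = map_mat complex_of_real (follower_laplacian N a)"
  have H: "H \<in> carrier_mat N N"
    unfolding H_def follower_laplacian_def by simp
  obtain v where "eigenvector (map_mat complex_of_real (observer_mat N S a mu)) v lam"
    using ev unfolding eigenvalue_def by blast
  then have v: "v \<in> carrier_vec (N * q)" "v \<noteq> 0\<^sub>v (N * q)"
    and v_ev: "map_mat complex_of_real (observer_mat N S a mu) *\<^sub>v v = lam \<cdot>\<^sub>v v"
    unfolding eigenvector_def by (simp_all add: observer_mat_dim[OF S])
  define W where "W = mat q N (\<lambda>(x, i). v $ (i * q + x))"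
  define K where "K = lam \<cdot>\<^sub>m 1\<^sub>m N + complex_of_real mu \<cdot>\<^sub>m transpose_mat H"
  have W: "W \<in> carrier_mat q N" and K: "K \<in> carrier_mat N N"
    unfolding W_def K_def using H by auto
  have W_nz: "W \<noteq> 0\<^sub>m q N"
  proof
    assume W0: "W = 0\<^sub>m q N"
    obtain c where c: "c < N * q" "v $ c \<noteq> 0"
      using nonzero_vec_entry[OF v] by blast
    then have "0 < q"
      by (cases q) simp_all
    then have c_div: "c div q < N" and c_mod: "c mod q < q"
      using c(1) by (simp_all add: less_mult_imp_div_less)
    then have "W $$ (c mod q, c div q) = v $ c"
      unfolding W_def by simp
    then show False
      using W0 c(2) c_div c_mod by simp
  qed
  have SWK: "map_mat complex_of_real S * W = W * K"
    using observer_eigenvector_intertwines[OF S v(1) v_ev] unfolding W_def K_def H_def .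
  have "map_mat complex_of_real S \<in> carrier_mat q q"
    using S by simp
  then obtain s where s: "eigenvalue (map_mat complex_of_real S) s" "eigenvalue (transpose_mat K) s"
    using intertwined_mats_common_eigenvalue[OF _ W K W_nz SWK] by blast
  have KT: "transpose_mat K = lam \<cdot>\<^sub>m 1\<^sub>m N + complex_of_real mu \<cdot>\<^sub>m H"
    unfolding K_def by (rule eq_matI) (use H in auto)
  have "eigenvalue H ((s - lam) / mu)"
    using eigenvalue_smult_one_add_smult[OF H _ s(2)[unfolded KT]] mu by simp
  moreover have "lam = s - mu * ((s - lam) / mu)"
    using mu by (simp add: field_simps)
  ultimately show ?thesis
    using that s(1) unfolding H_def by blast
qed

lemma observer_mat_hurwitz:
  assumes S: "S \<in> carrier_mat q q" and adm: "admissible_graph N e1 e2 a" and e: "0 < e1" "e1 \<le> e2"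
    and mu: "0 < mu" and large: "(\<Sum>x<q. \<Sum>y<q. \<bar>S $$ (x, y)\<bar>) < mu * laplacian_margin N e1 e2"
  shows "hurwitz (observer_mat N S a mu)"
  unfolding hurwitz_def
proof (intro conjI allI impI)
  show "square_mat (observer_mat N S a mu)"
    by (simp add: observer_mat_dim[OF S])
  fix lam assume ev: "eigenvalue (map_mat complex_of_real (observer_mat N S a mu)) lam"
  have "mu \<noteq> 0"
    using mu by simp
  then obtain s \<nu> :: complex where s: "eigenvalue (map_mat complex_of_real S) s"
    and \<nu>: "eigenvalue (map_mat complex_of_real (follower_laplacian N a)) \<nu>" and lam: "lam = s - mu * \<nu>"
    by (rule observer_mat_eigenvalue[OF S _ ev])
  have "Re s \<le> (\<Sum>x<q. \<Sum>y<q. \<bar>S $$ (x, y)\<bar>)"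
    using complex_Re_le_cmod[of s] eigenvalue_norm_le_sum_abs_entries[OF S s] by linarith
  moreover have "mu * laplacian_margin N e1 e2 \<le> mu * Re \<nu>"
    using follower_laplacian_eigenvalue_Re_ge[OF adm e \<nu>] mu by simp
  moreover have "Re lam = Re s - mu * Re \<nu>"
    unfolding lam by simp
  ultimately show "Re lam < 0"
    using large by linarith
qed

section \<open>The closed loop\<close>

lemma closed_loop_mat_eigenvalue:
  assumes S: "S \<in> carrier_mat q q"
    and blocks: "\<forall>i\<in>{1..N}. Acl i \<in> carrier_mat (n i) (n i) \<and> BK2 i \<in> carrier_mat (n i) q"
  shows "square_mat (closed_loop_mat N S a mu Acl BK2)"
    and "eigenvalue (map_mat complex_of_real (closed_loop_mat N S a mu Acl BK2)) e \<longleftrightarrow>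
      (\<exists>i\<in>{1..N}. eigenvalue (map_mat complex_of_real (Acl i)) e) \<or>
      eigenvalue (map_mat complex_of_real (observer_mat N S a mu)) e"
proof -
  let ?TL = "diag_block_mat (map Acl [1..<N+1])"
  let ?TR = "diag_block_mat (map BK2 [1..<N+1])"
  let ?BR = "observer_mat N S a mu"
  define nn where "nn = (\<Sum>i\<leftarrow>[1..<N+1]. n i)"
  have set_idx: "set [1..<N+1] = {1..N}"
    by auto
  have TL: "?TL \<in> carrier_mat nn nn"
    unfolding nn_def by (rule diag_block_mat_carrier) (use blocks set_idx in auto)
  have "?TR \<in> carrier_mat nn (\<Sum>i\<leftarrow>[1..<N+1]. q)"
    unfolding nn_def by (rule diag_block_mat_carrier) (use blocks set_idx in auto)
  then have TR: "?TR \<in> carrier_mat nn (N * q)"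
    by (simp add: sum_list_triv del: upt_Suc)
  have BR: "?BR \<in> carrier_mat (N * q) (N * q)"
    using observer_mat_carrier[OF S] .
  have CL: "closed_loop_mat N S a mu Acl BK2 = four_block_mat ?TL ?TR (0\<^sub>m (N * q) nn) ?BR"
    unfolding closed_loop_mat_def Let_def using TL BR by simp
  show "square_mat (closed_loop_mat N S a mu Acl BK2)"
    unfolding CL using TL TR BR by simp
  have CLc: "map_mat complex_of_real (closed_loop_mat N S a mu Acl BK2) =
        four_block_mat (map_mat complex_of_real ?TL) (map_mat complex_of_real ?TR)
          (0\<^sub>m (N * q) nn) (map_mat complex_of_real ?BR)"
    unfolding CL by (rule eq_matI) (use TL TR BR in auto)
  have TLc: "map_mat complex_of_real ?TL \<in> carrier_mat nn nn"
    and TRc: "map_mat complex_of_real ?TR \<in> carrier_mat nn (N * q)"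
    and BRc: "map_mat complex_of_real ?BR \<in> carrier_mat (N * q) (N * q)"
    using TL TR BR by simp_all
  have TL_map: "map_mat complex_of_real ?TL = diag_block_mat (map (map_mat complex_of_real) (map Acl [1..<N+1]))"
    by (rule map_mat_diag_block_mat) simp
  have sq: "\<forall>A\<in>set (map (map_mat complex_of_real) (map Acl [1..<N+1])). square_mat A"
    using blocks set_idx by auto
  show "eigenvalue (map_mat complex_of_real (closed_loop_mat N S a mu Acl BK2)) e \<longleftrightarrow>
      (\<exists>i\<in>{1..N}. eigenvalue (map_mat complex_of_real (Acl i)) e) \<or>
      eigenvalue (map_mat complex_of_real (observer_mat N S a mu)) e"
    unfolding CLc eigenvalue_four_block_mat_lower_zero[OF TLc TRc BRc]
    unfolding TL_map eigenvalue_diag_block_mat[OF sq]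
    using set_idx by (simp del: upt_Suc)
qed

lemma hurwitz_closed_loop_mat_iff:
  assumes S: "S \<in> carrier_mat q q"
    and blocks: "\<forall>i\<in>{1..N}. Acl i \<in> carrier_mat (n i) (n i) \<and> BK2 i \<in> carrier_mat (n i) q"
  shows "hurwitz (closed_loop_mat N S a mu Acl BK2) \<longleftrightarrow>
    (\<forall>i\<in>{1..N}. hurwitz (Acl i)) \<and> hurwitz (observer_mat N S a mu)"
proof -
  have "square_mat (Acl i)" if "i \<in> {1..N}" for i
    using blocks that unfolding carrier_mat_def by auto
  moreover have "square_mat (observer_mat N S a mu)"
    using observer_mat_carrier[OF S, of N a mu] by auto
  ultimately show ?thesis
    unfolding hurwitz_def using closed_loop_mat_eigenvalue[OF S blocks] by blast
qed

section \<open>Consistency with the data\<close>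

lemma mat_eq_add_iff_diff_eq:
  fixes P Q R :: "'a :: ab_group_add mat"
  assumes "P \<in> carrier_mat r c" "Q \<in> carrier_mat r c" "R \<in> carrier_mat r c"
  shows "P = Q + R \<longleftrightarrow> P - R = Q"
  using assms by (auto simp: mat_eq_iff diff_eq_eq)

lemma mat_zero_eq_add_iff:
  fixes P F :: "'a :: ab_group_add mat"
  assumes "P \<in> carrier_mat r c" "F \<in> carrier_mat r c"
  shows "0\<^sub>m r c = P + F \<longleftrightarrow> P = - F"
  using assms by (auto simp: mat_eq_iff eq_neg_iff_add_eq_0 add.commute)

lemma mat_add_diff_cancel_left:
  fixes A B :: "'a :: ab_group_add mat"
  assumes "A \<in> carrier_mat r c" "B \<in> carrier_mat r c"
  shows "A + (B - A) = B"
  using assms by (intro eq_matI) auto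

lemma consistent_sys_iff:
  assumes X: "X \<in> carrier_mat n L" and U: "U \<in> carrier_mat m L" and Ec: "Ec \<in> carrier_mat p L"
    and E: "E \<in> carrier_mat n q" and F: "F \<in> carrier_mat p q"
    and D11: "D11 \<in> carrier_mat L L" and V: "V \<in> carrier_mat q L"
  shows "consistent_sys D11 V X U Ec E F A B C D \<longleftrightarrow>
    A \<in> carrier_mat n n \<and> B \<in> carrier_mat n m \<and> C \<in> carrier_mat p n \<and> D \<in> carrier_mat p m \<and>
    X * D11 - E * V = A * X + B * U \<and> Ec - F * V = C * X + D * U"
proof -
  have state_eq: "X * D11 = A * X + B * U + E * V \<longleftrightarrow> X * D11 - E * V = A * X + B * U"
    if "A \<in> carrier_mat n n" "B \<in> carrier_mat n m" for A B
    using that X U D11 E V by (intro mat_eq_add_iff_diff_eq[of _ n L]) auto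
  have output_eq: "Ec = C * X + D * U + F * V \<longleftrightarrow> Ec - F * V = C * X + D * U"
    if "C \<in> carrier_mat p n" "D \<in> carrier_mat p m" for C D
    using that X U Ec F V by (intro mat_eq_add_iff_diff_eq[of _ p L]) auto
  show ?thesis
    unfolding consistent_sys_def using X U Ec state_eq output_eq by auto
qed

lemma closed_loop_gain_eq:
  fixes A B X U Xp :: "'a :: comm_ring_1 mat"
  assumes A: "A \<in> carrier_mat n n" and B: "B \<in> carrier_mat n m" and X: "X \<in> carrier_mat n L"
    and U: "U \<in> carrier_mat m L" and Xp: "Xp \<in> carrier_mat L n" and XXp: "X * Xp = 1\<^sub>m n"
  shows "A + B * (U * Xp) = (A * X + B * U) * Xp"
proof -
  have "(A * X + B * U) * Xp = A * (X * Xp) + B * (U * Xp)"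
    using A B X U Xp by (simp add: add_mult_distrib_mat[of _ n L] assoc_mult_mat[of _ n n _ L _ n]
        assoc_mult_mat[of _ n m _ L _ n])
  then show ?thesis
    using A unfolding XXp by simp
qed

lemma data_conditionD:
  assumes dc: "data_condition S D11 V X Ec E F Xp M"
    and X: "X \<in> carrier_mat n L" and S: "S \<in> carrier_mat q q"
  shows "Xp \<in> carrier_mat L n" "X * Xp = 1\<^sub>m n" "M \<in> carrier_mat L q"
    "hurwitz ((X * D11 - E * V) * Xp)"
    "(X * D11 - E * V) * M = X * M * S - E" "(Ec - F * V) * M = - F"
  using dc X S unfolding data_condition_def right_inverse_def by auto

lemma mult_split_right_inverse:
  fixes U Xp X M :: "'a :: comm_ring_1 mat"
  assumes U: "U \<in> carrier_mat m L" and Xp: "Xp \<in> carrier_mat L n" and X: "X \<in> carrier_mat n L"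
    and M: "M \<in> carrier_mat L q"
  shows "U * M = U * Xp * (X * M) + (U - U * Xp * X) * M"
proof -
  have "(U - U * Xp * X) * M = U * M - U * Xp * X * M"
    by (rule minus_mult_distrib_mat) (use U Xp X M in auto)
  moreover have "U * Xp * X * M = U * Xp * (X * M)"
    by (rule assoc_mult_mat) (use U Xp X M in auto)
  ultimately show ?thesis
    using mat_add_diff_cancel_left[of "U * Xp * (X * M)" m q "U * M"] U Xp X M by auto
qed

lemma data_condition_imp_regulator:
  assumes X: "X \<in> carrier_mat n L" and U: "U \<in> carrier_mat m L" and Ec: "Ec \<in> carrier_mat p L"
    and E: "E \<in> carrier_mat n q" and F: "F \<in> carrier_mat p q"
    and D11: "D11 \<in> carrier_mat L L" and V: "V \<in> carrier_mat q L" and S: "S \<in> carrier_mat q q"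
    and cs: "consistent_sys D11 V X U Ec E F A B C D"
    and dc: "data_condition S D11 V X Ec E F Xp M"
  shows "hurwitz (A + B * (U * Xp))"
    and "X * M * S = A * (X * M) + B * (U * M) + E"
    and "0\<^sub>m p q = C * (X * M) + D * (U * M) + F"
proof -
  note sys = consistent_sys_iff[OF X U Ec E F D11 V, THEN iffD1, OF cs]
  note data = data_conditionD[OF dc X S]
  have A: "A \<in> carrier_mat n n" and B: "B \<in> carrier_mat n m"
    and C: "C \<in> carrier_mat p n" and D: "D \<in> carrier_mat p m"
    using sys by auto
  show "hurwitz (A + B * (U * Xp))"
    using data(4) sys closed_loop_gain_eq[OF A B X U data(1,2)] by simp
  have state_eq: "(A * X + B * U) * M = A * (X * M) + B * (U * M)"
    using A B X U data(3) by (simp add: add_mult_distrib_mat[of _ n L] assoc_mult_mat[of _ n n _ L _ q]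
        assoc_mult_mat[of _ n m _ L _ q])
  have output_eq: "(C * X + D * U) * M = C * (X * M) + D * (U * M)"
    using C D X U data(3) by (simp add: add_mult_distrib_mat[of _ p L] assoc_mult_mat[of _ p n _ L _ q]
        assoc_mult_mat[of _ p m _ L _ q])
  show "X * M * S = A * (X * M) + B * (U * M) + E"
    using data(5) sys A B X U E S data(3) unfolding state_eq[symmetric]
    by (subst mat_eq_add_iff_diff_eq[of _ n q]) auto
  show "0\<^sub>m p q = C * (X * M) + D * (U * M) + F"
    using data(6) sys C D X U F data(3) unfolding output_eq[symmetric]
    by (subst mat_zero_eq_add_iff) auto
qed

lemma row_echelon_form_generalized_inverse:
  fixes R :: "'a :: field mat"
  assumes R: "R \<in> carrier_mat nr nc" and ref: "row_echelon_form R"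
  obtains Rp where "Rp \<in> carrier_mat nc nr" "R * Rp * R = R"
proof -
  obtain f where "pivot_fun R f nc"
    using ref R unfolding row_echelon_form_def by auto
  note piv = pivot_funD[OF carrier_matD(1)[OF R] this]
  \<comment> \<open>Rp selects the pivot columns of R, so that R Rp = Dp is the diagonal 0/1 matrix marking
      the nonzero rows of R.\<close>
  define Rp :: "'a mat" where "Rp = mat nc nr (\<lambda>(j, i). if f i < nc \<and> j = f i then 1 else 0)"
  define Dp :: "'a mat" where "Dp = mat nr nr (\<lambda>(i', i). if f i < nc \<and> i' = i then 1 else 0)"
  have Rp: "Rp \<in> carrier_mat nc nr" and Dp: "Dp \<in> carrier_mat nr nr"
    unfolding Rp_def Dp_def by simp_all
  have R_Rp: "R * Rp = Dp"
  proof (rule eq_matI)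
    fix i' i assume "i' < dim_row Dp" "i < dim_col Dp"
    then have i: "i' < nr" "i < nr"
      unfolding Dp_def by auto
    have "(R * Rp) $$ (i', i) = (\<Sum>j<nc. R $$ (i', j) * Rp $$ (j, i))"
      using R Rp i by (simp add: scalar_prod_def atLeast0LessThan)
    also have "\<dots> = (if f i < nc then R $$ (i', f i) else 0)"
      using i unfolding Rp_def by (simp add: if_distrib[of "\<lambda>x. _ * x"] cong: if_cong)
    also have "\<dots> = Dp $$ (i', i)"
      using i piv(4)[of i] piv(5)[of i i'] unfolding Dp_def by auto
    finally show "(R * Rp) $$ (i', i) = Dp $$ (i', i)" .
  qed (use R Rp Dp in auto)
  have Dp_R: "Dp * R = R"
  proof (rule eq_matI)
    fix i' k assume "i' < dim_row R" "k < dim_col R"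
    then have i: "i' < nr" "k < nc"
      using R by auto
    have "(Dp * R) $$ (i', k) = (\<Sum>i<nr. Dp $$ (i', i) * R $$ (i, k))"
      using R Dp i by (simp add: scalar_prod_def atLeast0LessThan)
    also have "\<dots> = (\<Sum>i<nr. if i = i' then (if f i' < nc then R $$ (i', k) else 0) else 0)"
      using i unfolding Dp_def by (intro sum.cong refl) auto
    also have "\<dots> = (if f i' < nc then R $$ (i', k) else 0)"
      using i by simp
    also have "\<dots> = R $$ (i', k)"
      using i piv(1)[of i'] piv(2)[of i' k] by auto
    finally show "(Dp * R) $$ (i', k) = R $$ (i', k)" .
  qed (use R Dp in auto)
  show ?thesis
    using that[OF Rp] R_Rp Dp_R by simp
qed

lemma generalized_inverse_exists:
  fixes G :: "'a :: field mat"
  assumes G: "G \<in> carrier_mat nr nc"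
  obtains Y where "Y \<in> carrier_mat nc nr" "G * Y * G = G"
proof -
  define R where "R = gauss_jordan_single G"
  note gj = gauss_jordan_single[OF G R_def[symmetric]]
  have R: "R \<in> carrier_mat nr nc"
    using gj(2) .
  obtain P Q where RPG: "R = P * G" and P: "P \<in> carrier_mat nr nr" and Q: "Q \<in> carrier_mat nr nr"
    and PQ: "P * Q = 1\<^sub>m nr" and QP: "Q * P = 1\<^sub>m nr"
    using gj(4) by blast
  obtain Rp where Rp: "Rp \<in> carrier_mat nc nr" and RRpR: "R * Rp * R = R"
    using row_echelon_form_generalized_inverse[OF R gj(3)] by blast
  have G_QR: "G = Q * R"
    using G P Q unfolding RPG by (simp add: assoc_mult_mat[symmetric, of Q nr nr P nr G nc] QP)
  have assoc: "A * B * C = A * (B * C)"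
    if "dim_col A = dim_row B" "dim_col B = dim_row C" for A B C :: "'a mat"
    using that by (intro assoc_mult_mat[of A "dim_row A" "dim_col A" B "dim_col B" C "dim_col C"]) auto
  have PQR: "P * (Q * R) = R"
    using P Q R by (simp add: assoc_mult_mat[symmetric, of P nr nr Q nr R nc] PQ)
  have "G * (Rp * P) * G = Q * (R * Rp * R)"
    unfolding G_QR using R Rp P Q by (simp add: assoc PQR)
  also have "\<dots> = G"
    unfolding RRpR G_QR ..
  finally show ?thesis
    using that[of "Rp * P"] Rp P by simp
qed

lemma mat_diff_add_eq:
  fixes A B C D :: "'a :: ab_group_add mat"
  assumes "A \<in> carrier_mat r c" "B \<in> carrier_mat r c" "C \<in> carrier_mat r c" "D \<in> carrier_mat r c"
    and "C - B = D - A"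
  shows "A - B + C = D"
  using assms by (auto simp: mat_eq_iff algebra_simps)

lemma right_inverse_complement:
  fixes X Xp :: "'a :: comm_ring_1 mat"
  assumes X: "X \<in> carrier_mat n L" and Xp: "Xp \<in> carrier_mat L n" and XXp: "X * Xp = 1\<^sub>m n"
  shows "X * (1\<^sub>m L - Xp * X) = 0\<^sub>m n L"
proof -
  have "X * (1\<^sub>m L - Xp * X) = X * 1\<^sub>m L - X * (Xp * X)"
    by (rule mult_minus_distrib_mat) (use X Xp in auto)
  also have "X * (Xp * X) = X"
    using X Xp XXp by (simp add: assoc_mult_mat[symmetric, of X n L Xp n X L])
  finally show ?thesis
    using X by simp
qed

lemma residual_mult_eq:
  fixes A B X U M K1 K2 P :: "'a :: comm_ring_1 mat"
  assumes A: "A \<in> carrier_mat r n" and B: "B \<in> carrier_mat r m" and X: "X \<in> carrier_mat n L"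
    and U: "U \<in> carrier_mat m L" and M: "M \<in> carrier_mat L q" and K1: "K1 \<in> carrier_mat m n"
    and K2: "K2 \<in> carrier_mat m q" and P: "P \<in> carrier_mat m m"
    and UM: "U * M = K1 * (X * M) + P * K2" and BP: "B * P = B"
  shows "(A * X + B * U) * M = A * (X * M) + B * (K1 * (X * M) + K2)"
proof -
  have XM: "X * M \<in> carrier_mat n q"
    using X M by simp
  have "(A * X + B * U) * M = A * (X * M) + B * (U * M)"
    using A B X U M by (simp add: add_mult_distrib_mat[of _ r L] assoc_mult_mat[of _ r n _ L _ q]
        assoc_mult_mat[of _ r m _ L _ q])
  also have "B * (U * M) = B * (K1 * (X * M)) + B * (P * K2)"
    unfolding UM by (rule mult_add_distrib_mat[OF B]) (use K1 XM P K2 in auto)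
  also have "B * (P * K2) = B * K2"
    using B P K2 BP by (simp add: assoc_mult_mat[symmetric, of B r m P m K2 q])
  also have "B * (K1 * (X * M)) + B * K2 = B * (K1 * (X * M) + K2)"
    by (rule mult_add_distrib_mat[OF B, symmetric]) (use K1 XM K2 in auto)
  finally show ?thesis .
qed

lemma residual_mult_right_inverse_complement:
  fixes X U Xp A0 B0 :: "'a :: comm_ring_1 mat"
  assumes X: "X \<in> carrier_mat n L" and U: "U \<in> carrier_mat m L" and Xp: "Xp \<in> carrier_mat L n"
    and XXp: "X * Xp = 1\<^sub>m n" and A0: "A0 \<in> carrier_mat r n" and B0: "B0 \<in> carrier_mat r m"
  shows "(A0 * X + B0 * U) * (1\<^sub>m L - Xp * X) = B0 * (U * (1\<^sub>m L - Xp * X))"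
proof -
  have C: "1\<^sub>m L - Xp * X \<in> carrier_mat L L"
    using Xp X by auto
  have "(A0 * X + B0 * U) * (1\<^sub>m L - Xp * X) = (A0 * X) * (1\<^sub>m L - Xp * X) + (B0 * U) * (1\<^sub>m L - Xp * X)"
    by (rule add_mult_distrib_mat) (use A0 B0 X U C in auto)
  also have "(A0 * X) * (1\<^sub>m L - Xp * X) = A0 * (X * (1\<^sub>m L - Xp * X))"
    by (rule assoc_mult_mat) (use A0 X C in auto)
  also have "(B0 * U) * (1\<^sub>m L - Xp * X) = B0 * (U * (1\<^sub>m L - Xp * X))"
    by (rule assoc_mult_mat) (use B0 U C in auto)
  also have "A0 * (X * (1\<^sub>m L - Xp * X)) = 0\<^sub>m r L"
    unfolding right_inverse_complement[OF X Xp XXp] using A0 by simp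
  also have "0\<^sub>m r L + B0 * (U * (1\<^sub>m L - Xp * X)) = B0 * (U * (1\<^sub>m L - Xp * X))"
    by (rule left_add_zero_mat) (use B0 U C in auto)
  finally show ?thesis .
qed

lemma projected_residual_eq:
  fixes X U Xp A0 B0 P :: "'a :: comm_ring_1 mat"
  assumes X: "X \<in> carrier_mat n L" and U: "U \<in> carrier_mat m L" and Xp: "Xp \<in> carrier_mat L n"
    and XXp: "X * Xp = 1\<^sub>m n" and A0: "A0 \<in> carrier_mat r n" and B0: "B0 \<in> carrier_mat r m"
    and P: "P \<in> carrier_mat m m" and PG: "P * (U * (1\<^sub>m L - Xp * X)) = U * (1\<^sub>m L - Xp * X)"
  shows "((A0 * X + B0 * U) * Xp - B0 * P * (U * Xp)) * X + B0 * P * U = A0 * X + B0 * U"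
proof -
  define R where "R = A0 * X + B0 * U"
  define T where "T = Xp * X"
  have R: "R \<in> carrier_mat r L" and T: "T \<in> carrier_mat L L"
    unfolding R_def T_def using A0 B0 X U Xp by auto
  have BP: "B0 * P \<in> carrier_mat r m"
    using B0 P by simp
  have "R - R * T = R * (1\<^sub>m L - T)"
    using mult_minus_distrib_mat[OF R one_carrier_mat T] R by simp
  also have "\<dots> = B0 * (P * (U * (1\<^sub>m L - T)))"
    unfolding R_def T_def residual_mult_right_inverse_complement[OF X U Xp XXp A0 B0] PG ..
  also have "\<dots> = B0 * P * (U * (1\<^sub>m L - T))"
    by (rule assoc_mult_mat[symmetric]) (use B0 P U T in auto)
  also have "U * (1\<^sub>m L - T) = U - U * T"
    using mult_minus_distrib_mat[OF U one_carrier_mat T] U by simp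
  also have "B0 * P * (U - U * T) = B0 * P * U - B0 * P * (U * T)"
    by (rule mult_minus_distrib_mat) (use BP U T in auto)
  finally have key: "B0 * P * U - B0 * P * (U * T) = R - R * T" ..
  have "(R * Xp - B0 * P * (U * Xp)) * X = R * Xp * X - B0 * P * (U * Xp) * X"
    by (rule minus_mult_distrib_mat) (use R Xp BP U X in auto)
  also have "R * Xp * X = R * T"
    unfolding T_def by (rule assoc_mult_mat) (use R Xp X in auto)
  also have "B0 * P * (U * Xp) * X = B0 * P * (U * T)"
    unfolding T_def using BP U Xp X
    by (simp add: assoc_mult_mat[of "B0 * P" r m "U * Xp" n X L] assoc_mult_mat[of U m L Xp n X L])
  finally have "(R * Xp - B0 * P * (U * Xp)) * X = R * T - B0 * P * (U * T)" .
  moreover have "R * T - B0 * P * (U * T) + B0 * P * U = R"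
    by (rule mat_diff_add_eq[OF _ _ _ R key]) (use R T BP U in auto)
  ultimately show ?thesis
    unfolding R_def[symmetric] by simp
qed

lemma projected_consistent_sys:
  assumes X: "X \<in> carrier_mat n L" and U: "U \<in> carrier_mat m L" and Ec: "Ec \<in> carrier_mat p L"
    and E: "E \<in> carrier_mat n q" and F: "F \<in> carrier_mat p q"
    and D11: "D11 \<in> carrier_mat L L" and V: "V \<in> carrier_mat q L"
    and cs: "consistent_sys D11 V X U Ec E F A0 B0 C0 D0"
    and Xp: "Xp \<in> carrier_mat L n" and XXp: "X * Xp = 1\<^sub>m n"
    and P: "P \<in> carrier_mat m m" and PG: "P * (U * (1\<^sub>m L - Xp * X)) = U * (1\<^sub>m L - Xp * X)"
  shows "consistent_sys D11 V X U Ec E F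
    ((X * D11 - E * V) * Xp - B0 * P * (U * Xp)) (B0 * P)
    ((Ec - F * V) * Xp - D0 * P * (U * Xp)) (D0 * P)"
proof -
  note sys = consistent_sys_iff[OF X U Ec E F D11 V, THEN iffD1, OF cs]
  then have A0: "A0 \<in> carrier_mat n n" and B0: "B0 \<in> carrier_mat n m"
    and C0: "C0 \<in> carrier_mat p n" and D0: "D0 \<in> carrier_mat p m"
    by auto
  have "X * D11 - E * V = A0 * X + B0 * U" "Ec - F * V = C0 * X + D0 * U"
    using sys by auto
  then have "X * D11 - E * V = ((X * D11 - E * V) * Xp - B0 * P * (U * Xp)) * X + B0 * P * U"
    and "Ec - F * V = ((Ec - F * V) * Xp - D0 * P * (U * Xp)) * X + D0 * P * U"
    using projected_residual_eq[OF X U Xp XXp A0 B0 P PG] projected_residual_eq[OF X U Xp XXp C0 D0 P PG]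
    by simp_all
  then show ?thesis
    unfolding consistent_sys_iff[OF X U Ec E F D11 V] using A0 B0 C0 D0 X U Xp P D11 E V Ec F by auto
qed

lemma right_inverse_lift:
  fixes X U Xp Pi Z :: "'a :: comm_ring_1 mat"
  assumes X: "X \<in> carrier_mat n L" and U: "U \<in> carrier_mat m L" and Xp: "Xp \<in> carrier_mat L n"
    and XXp: "X * Xp = 1\<^sub>m n" and Pi: "Pi \<in> carrier_mat n q" and Z: "Z \<in> carrier_mat L q"
  shows "X * (Xp * Pi + (1\<^sub>m L - Xp * X) * Z) = Pi"
    and "U * (Xp * Pi + (1\<^sub>m L - Xp * X) * Z) = U * Xp * Pi + U * (1\<^sub>m L - Xp * X) * Z"
proof -
  have T: "1\<^sub>m L - Xp * X \<in> carrier_mat L L"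
    using Xp X by auto
  have "X * (Xp * Pi + (1\<^sub>m L - Xp * X) * Z) = X * (Xp * Pi) + X * ((1\<^sub>m L - Xp * X) * Z)"
    by (rule mult_add_distrib_mat) (use X Xp Pi T Z in auto)
  also have "X * (Xp * Pi) = (X * Xp) * Pi"
    by (rule assoc_mult_mat[symmetric]) (use X Xp Pi in auto)
  also have "X * ((1\<^sub>m L - Xp * X) * Z) = (X * (1\<^sub>m L - Xp * X)) * Z"
    by (rule assoc_mult_mat[symmetric]) (use X T Z in auto)
  finally show "X * (Xp * Pi + (1\<^sub>m L - Xp * X) * Z) = Pi"
    unfolding XXp right_inverse_complement[OF X Xp XXp] using Pi left_mult_zero_mat[OF Z] by simp
  have "U * (Xp * Pi + (1\<^sub>m L - Xp * X) * Z) = U * (Xp * Pi) + U * ((1\<^sub>m L - Xp * X) * Z)"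
    by (rule mult_add_distrib_mat) (use U Xp Pi T Z in auto)
  also have "U * (Xp * Pi) = U * Xp * Pi"
    by (rule assoc_mult_mat[symmetric]) (use U Xp Pi in auto)
  also have "U * ((1\<^sub>m L - Xp * X) * Z) = U * (1\<^sub>m L - Xp * X) * Z"
    by (rule assoc_mult_mat[symmetric]) (use U T Z in auto)
  finally show "U * (Xp * Pi + (1\<^sub>m L - Xp * X) * Z) = U * Xp * Pi + U * (1\<^sub>m L - Xp * X) * Z" .
qed

lemma projected_generalized_inverse:
  assumes X: "X \<in> carrier_mat n L" and U: "U \<in> carrier_mat m L" and Ec: "Ec \<in> carrier_mat p L"
    and E: "E \<in> carrier_mat n q" and F: "F \<in> carrier_mat p q"
    and D11: "D11 \<in> carrier_mat L L" and V: "V \<in> carrier_mat q L"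
    and cs: "consistent_sys D11 V X U Ec E F A0 B0 C0 D0"
    and Xp: "Xp \<in> carrier_mat L n" and XXp: "X * Xp = 1\<^sub>m n"
    and Y: "Y \<in> carrier_mat L m"
    and GYG: "U * (1\<^sub>m L - Xp * X) * Y * (U * (1\<^sub>m L - Xp * X)) = U * (1\<^sub>m L - Xp * X)"
  defines "P \<equiv> U * (1\<^sub>m L - Xp * X) * Y"
  shows "consistent_sys D11 V X U Ec E F
      ((X * D11 - E * V) * Xp - B0 * P * (U * Xp)) (B0 * P)
      ((Ec - F * V) * Xp - D0 * P * (U * Xp)) (D0 * P)"
    and "B0 * P * P = B0 * P" and "D0 * P * P = D0 * P"
proof -
  have G: "U * (1\<^sub>m L - Xp * X) \<in> carrier_mat m L"
    using U Xp X by auto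
  have P: "P \<in> carrier_mat m m"
    unfolding P_def using G Y by auto
  have PG: "P * (U * (1\<^sub>m L - Xp * X)) = U * (1\<^sub>m L - Xp * X)"
    unfolding P_def using GYG .
  have "P * P = P * (U * (1\<^sub>m L - Xp * X)) * Y"
    unfolding P_def by (rule assoc_mult_mat[symmetric]) (use G Y in auto)
  then have PP: "P * P = P"
    using PG by (simp add: P_def)
  show "consistent_sys D11 V X U Ec E F
      ((X * D11 - E * V) * Xp - B0 * P * (U * Xp)) (B0 * P)
      ((Ec - F * V) * Xp - D0 * P * (U * Xp)) (D0 * P)"
    by (rule projected_consistent_sys[OF X U Ec E F D11 V cs Xp XXp P PG])
  have "B0 \<in> carrier_mat n m" "D0 \<in> carrier_mat p m"
    using consistent_sys_iff[OF X U Ec E F D11 V, THEN iffD1, OF cs] by auto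
  then show "B0 * P * P = B0 * P" and "D0 * P * P = D0 * P"
    using assoc_mult_mat[of _ _ m P m P m] P PP by auto
qed

lemma regulator_imp_data_condition:
  fixes Pi :: "real mat"
  assumes X: "X \<in> carrier_mat n L" and U: "U \<in> carrier_mat m L" and Ec: "Ec \<in> carrier_mat p L"
    and E: "E \<in> carrier_mat n q" and F: "F \<in> carrier_mat p q"
    and D11: "D11 \<in> carrier_mat L L" and V: "V \<in> carrier_mat q L" and S: "S \<in> carrier_mat q q"
    and Xp: "Xp \<in> carrier_mat L n" and XXp: "X * Xp = 1\<^sub>m n"
    and cs: "consistent_sys D11 V X U Ec E F A B C D" and hw: "hurwitz (A + B * (U * Xp))"
    and Y: "Y \<in> carrier_mat L m"
    and BY: "B * (U * (1\<^sub>m L - Xp * X) * Y) = B" and DY: "D * (U * (1\<^sub>m L - Xp * X) * Y) = D"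
    and K2: "K2 \<in> carrier_mat m q" and Pi: "Pi \<in> carrier_mat n q"
    and state_eq: "Pi * S = A * Pi + B * (U * Xp * Pi + K2) + E"
    and output_eq: "0\<^sub>m p q = C * Pi + D * (U * Xp * Pi + K2) + F"
  shows "data_condition S D11 V X Ec E F Xp (Xp * Pi + (1\<^sub>m L - Xp * X) * (Y * K2))"
proof -
  note sys = consistent_sys_iff[OF X U Ec E F D11 V, THEN iffD1, OF cs]
  have A: "A \<in> carrier_mat n n" and B: "B \<in> carrier_mat n m"
    and C: "C \<in> carrier_mat p n" and D: "D \<in> carrier_mat p m"
    using sys by auto
  define M where "M = Xp * Pi + (1\<^sub>m L - Xp * X) * (Y * K2)"
  have T: "1\<^sub>m L - Xp * X \<in> carrier_mat L L"
    using Xp X by auto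
  have YK: "Y * K2 \<in> carrier_mat L q"
    using Y K2 by simp
  have M: "M \<in> carrier_mat L q"
    unfolding M_def using Xp Pi T YK by simp
  note lift = right_inverse_lift[OF X U Xp XXp Pi YK, folded M_def]
  have "U * (1\<^sub>m L - Xp * X) * (Y * K2) = U * (1\<^sub>m L - Xp * X) * Y * K2"
    by (rule assoc_mult_mat[symmetric, of _ m L]) (use U T Y K2 in auto)
  then have UM: "U * M = U * Xp * (X * M) + U * (1\<^sub>m L - Xp * X) * Y * K2"
    unfolding lift by simp
  note XM = lift(1)
  have UTY: "U * (1\<^sub>m L - Xp * X) * Y \<in> carrier_mat m m" and UXp: "U * Xp \<in> carrier_mat m n"
    using U T Y Xp by auto
  have sys_state: "X * D11 - E * V = A * X + B * U" and sys_output: "Ec - F * V = C * X + D * U"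
    using sys by auto
  have "Pi * S - E = A * Pi + B * (U * Xp * Pi + K2)"
    using state_eq mat_eq_add_iff_diff_eq[of "Pi * S" n q "A * Pi + B * (U * Xp * Pi + K2)" E]
      Pi S A B UXp K2 E by auto
  moreover have "(X * D11 - E * V) * M = A * Pi + B * (U * Xp * Pi + K2)"
    using residual_mult_eq[OF A B X U M UXp K2 UTY UM BY] unfolding XM sys_state .
  ultimately have state: "(X * D11 - E * V) * M = X * M * S - E"
    unfolding XM by simp
  have "C * Pi + D * (U * Xp * Pi + K2) = - F"
    using output_eq mat_zero_eq_add_iff[of "C * Pi + D * (U * Xp * Pi + K2)" p q F]
      Pi C D UXp K2 F by auto
  moreover have "(Ec - F * V) * M = C * Pi + D * (U * Xp * Pi + K2)"
    using residual_mult_eq[OF C D X U M UXp K2 UTY UM DY] unfolding XM sys_output .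
  ultimately have output_res: "(Ec - F * V) * M = - F"
    by simp
  have "hurwitz ((X * D11 - E * V) * Xp)"
    using hw unfolding sys_state closed_loop_gain_eq[OF A B X U Xp XXp] .
  then show ?thesis
    unfolding data_condition_def right_inverse_def M_def[symmetric]
    using Xp XXp M state output_res carrier_matD[OF X] carrier_matD[OF S] by simp
qed

section \<open>Informativity\<close>

lemma data_conditions_imp_gains_work:
  assumes S: "S \<in> carrier_mat q q" and D11: "D11 \<in> carrier_mat L L" and V: "V \<in> carrier_mat q L"
    and dims: "\<forall>i\<in>{1..N}. X i \<in> carrier_mat (n i) L \<and> U i \<in> carrier_mat (m i) L \<and>
                  Ec i \<in> carrier_mat p L \<and> E i \<in> carrier_mat (n i) q \<and> F i \<in> carrier_mat p q"
    and observer: "hurwitz (observer_mat N S a mu)"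
    and dcs: "\<forall>i\<in>{1..N}. data_condition S D11 V (X i) (Ec i) (E i) (F i) (Xp i) (M i)"
  shows "gains_work N S a mu D11 V X U Ec E F (\<lambda>i. U i * Xp i) (\<lambda>i. (U i - U i * Xp i * X i) * M i)"
proof -
  have X: "X i \<in> carrier_mat (n i) L" and U: "U i \<in> carrier_mat (m i) L"
    and Ec: "Ec i \<in> carrier_mat p L" and E: "E i \<in> carrier_mat (n i) q" and F: "F i \<in> carrier_mat p q"
    if "i \<in> {1..N}" for i
    using dims that by auto
  have Xp: "Xp i \<in> carrier_mat L (n i)" and M: "M i \<in> carrier_mat L q" if i: "i \<in> {1..N}" for i
    using data_conditionD[OF dcs[rule_format, OF i] X[OF i] S] by auto
  have K1: "U i * Xp i \<in> carrier_mat (m i) (n i)"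
    and K2: "(U i - U i * Xp i * X i) * M i \<in> carrier_mat (m i) q" if i: "i \<in> {1..N}" for i
    using U[OF i] X[OF i] Xp[OF i] M[OF i] by auto
  have dim: "dim_row (X i) = n i" "dim_row (U i) = m i" "dim_row (Ec i) = p" if i: "i \<in> {1..N}" for i
    using X[OF i] U[OF i] Ec[OF i] by auto
  have dim_S: "dim_row S = q"
    using S by simp
  have "hurwitz (closed_loop_mat N S a mu (\<lambda>i. A i + B i * (U i * Xp i))
                  (\<lambda>i. B i * ((U i - U i * Xp i * X i) * M i))) \<and>
        (\<forall>i\<in>{1..N}. \<exists>Pi Gamma.
            Pi \<in> carrier_mat (dim_row (X i)) (dim_row S) \<and> Gamma \<in> carrier_mat (dim_row (U i)) (dim_row S) \<and>
            Gamma = U i * Xp i * Pi + (U i - U i * Xp i * X i) * M i \<and>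
            Pi * S = A i * Pi + B i * Gamma + E i \<and>
            0\<^sub>m (dim_row (Ec i)) (dim_row S) = C i * Pi + D i * Gamma + F i)"
    if cs: "\<forall>i\<in>{1..N}. consistent_sys D11 V (X i) (U i) (Ec i) (E i) (F i) (A i) (B i) (C i) (D i)"
    for A B C D
  proof (intro conjI ballI)
    have sys: "A i \<in> carrier_mat (n i) (n i) \<and> B i \<in> carrier_mat (n i) (m i)" if i: "i \<in> {1..N}" for i
      using consistent_sys_iff[OF X[OF i] U[OF i] Ec[OF i] E[OF i] F[OF i] D11 V, THEN iffD1,
          OF cs[rule_format, OF i]] by auto
    note reg = data_condition_imp_regulator[OF X U Ec E F D11 V S cs[rule_format] dcs[rule_format]]
    show "hurwitz (closed_loop_mat N S a mu (\<lambda>i. A i + B i * (U i * Xp i))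
                  (\<lambda>i. B i * ((U i - U i * Xp i * X i) * M i)))"
    proof (subst hurwitz_closed_loop_mat_iff[OF S])
      show "\<forall>i\<in>{1..N}. A i + B i * (U i * Xp i) \<in> carrier_mat (n i) (n i) \<and>
                       B i * ((U i - U i * Xp i * X i) * M i) \<in> carrier_mat (n i) q"
        using sys K1 K2 by fastforce
    qed (use reg(1) observer in simp)
    fix i assume i: "i \<in> {1..N}"
    have "U i * M i = U i * Xp i * (X i * M i) + (U i - U i * Xp i * X i) * M i"
      by (rule mult_split_right_inverse[OF U[OF i] Xp[OF i] X[OF i] M[OF i]])
    then show "\<exists>Pi Gamma.
            Pi \<in> carrier_mat (dim_row (X i)) (dim_row S) \<and> Gamma \<in> carrier_mat (dim_row (U i)) (dim_row S) \<and>
            Gamma = U i * Xp i * Pi + (U i - U i * Xp i * X i) * M i \<and>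
            Pi * S = A i * Pi + B i * Gamma + E i \<and>
            0\<^sub>m (dim_row (Ec i)) (dim_row S) = C i * Pi + D i * Gamma + F i"
      using reg(2,3)[OF i i i i i i i] X[OF i] U[OF i] M[OF i]
      unfolding dim[OF i] dim_S by (intro exI[of _ "X i * M i"] exI[of _ "U i * M i"]) auto
  qed
  moreover have "U i * Xp i \<in> carrier_mat (dim_row (U i)) (dim_row (X i)) \<and>
      (U i - U i * Xp i * X i) * M i \<in> carrier_mat (dim_row (U i)) (dim_row S)" if i: "i \<in> {1..N}" for i
    unfolding dim[OF i] dim_S using K1[OF i] K2[OF i] by simp
  ultimately show ?thesis
    unfolding gains_work_def by blast
qed

lemma gains_work_imp_data_conditions:
  assumes S: "S \<in> carrier_mat q q" and D11: "D11 \<in> carrier_mat L L" and V: "V \<in> carrier_mat q L"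
    and dims: "\<forall>i\<in>{1..N}. X i \<in> carrier_mat (n i) L \<and> U i \<in> carrier_mat (m i) L \<and>
                  Ec i \<in> carrier_mat p L \<and> E i \<in> carrier_mat (n i) q \<and> F i \<in> carrier_mat p q"
    and exact: "\<exists>A B C D. \<forall>i\<in>{1..N}.
                  consistent_sys D11 V (X i) (U i) (Ec i) (E i) (F i) (A i) (B i) (C i) (D i)"
    and ri: "\<forall>i\<in>{1..N}. right_inverse (X i) (Xp i)"
    and gw: "gains_work N S a mu D11 V X U Ec E F (\<lambda>i. U i * Xp i) K2"
  shows "\<forall>i\<in>{1..N}. \<exists>M. data_condition S D11 V (X i) (Ec i) (E i) (F i) (Xp i) M"
proof -
  obtain A0 B0 C0 D0 where cs0: "\<forall>i\<in>{1..N}.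
      consistent_sys D11 V (X i) (U i) (Ec i) (E i) (F i) (A0 i) (B0 i) (C0 i) (D0 i)"
    using exact by blast
  have X: "X i \<in> carrier_mat (n i) L" and U: "U i \<in> carrier_mat (m i) L"
    and Ec: "Ec i \<in> carrier_mat p L" and E: "E i \<in> carrier_mat (n i) q" and F: "F i \<in> carrier_mat p q"
    if "i \<in> {1..N}" for i
    using dims that by auto
  have Xp: "Xp i \<in> carrier_mat L (n i)" and XXp: "X i * Xp i = 1\<^sub>m (n i)" if i: "i \<in> {1..N}" for i
    using ri[rule_format, OF i] carrier_matD[OF X[OF i]] unfolding right_inverse_def by auto
  define G where "G i = U i * (1\<^sub>m L - Xp i * X i)" for i
  have "\<forall>i\<in>{1..N}. \<exists>Y. Y \<in> carrier_mat L (m i) \<and> G i * Y * G i = G i"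
  proof
    fix i assume i: "i \<in> {1..N}"
    have "G i \<in> carrier_mat (m i) L"
      unfolding G_def using U[OF i] Xp[OF i] X[OF i] by auto
    then show "\<exists>Y. Y \<in> carrier_mat L (m i) \<and> G i * Y * G i = G i"
      by (metis generalized_inverse_exists)
  qed
  then obtain Y where Y: "\<And>i. i \<in> {1..N} \<Longrightarrow> Y i \<in> carrier_mat L (m i) \<and> G i * Y i * G i = G i"
    by metis
  define P where "P i = G i * Y i" for i
  define B where "B i = B0 i * P i" for i
  define D where "D i = D0 i * P i" for i
  define A where "A i = (X i * D11 - E i * V) * Xp i - B i * (U i * Xp i)" for i
  define C where "C i = (Ec i - F i * V) * Xp i - D i * (U i * Xp i)" for i
  have cs: "consistent_sys D11 V (X i) (U i) (Ec i) (E i) (F i) (A i) (B i) (C i) (D i)"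
    and BP: "B i * P i = B i" and DP: "D i * P i = D i" if i: "i \<in> {1..N}" for i
    using projected_generalized_inverse[OF X[OF i] U[OF i] Ec[OF i] E[OF i] F[OF i] D11 V
        cs0[rule_format, OF i] Xp[OF i] XXp[OF i] Y[OF i, THEN conjunct1]
        Y[OF i, THEN conjunct2, unfolded G_def]]
    unfolding A_def B_def C_def D_def P_def G_def by simp_all
  have sys: "A i \<in> carrier_mat (n i) (n i)" "B i \<in> carrier_mat (n i) (m i)" if i: "i \<in> {1..N}" for i
    using consistent_sys_iff[OF X[OF i] U[OF i] Ec[OF i] E[OF i] F[OF i] D11 V, THEN iffD1,
        OF cs[OF i]] by auto
  have K2: "K2 i \<in> carrier_mat (m i) q" if i: "i \<in> {1..N}" for i
  proof -
    have "K2 i \<in> carrier_mat (dim_row (U i)) (dim_row S)"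
      using gw i unfolding gains_work_def by blast
    then show ?thesis
      using U[OF i] S by simp
  qed
  have closed_loop: "hurwitz (closed_loop_mat N S a mu (\<lambda>i. A i + B i * (U i * Xp i)) (\<lambda>i. B i * K2 i))"
    and regulator: "\<forall>i\<in>{1..N}. \<exists>Pi Gamma.
            Pi \<in> carrier_mat (dim_row (X i)) (dim_row S) \<and> Gamma \<in> carrier_mat (dim_row (U i)) (dim_row S) \<and>
            Gamma = U i * Xp i * Pi + K2 i \<and>
            Pi * S = A i * Pi + B i * Gamma + E i \<and>
            0\<^sub>m (dim_row (Ec i)) (dim_row S) = C i * Pi + D i * Gamma + F i"
    using gw cs unfolding gains_work_def by blast+
  have blocks: "\<forall>i\<in>{1..N}. A i + B i * (U i * Xp i) \<in> carrier_mat (n i) (n i) \<and>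
                                B i * K2 i \<in> carrier_mat (n i) q"
  proof
    fix i assume i: "i \<in> {1..N}"
    show "A i + B i * (U i * Xp i) \<in> carrier_mat (n i) (n i) \<and> B i * K2 i \<in> carrier_mat (n i) q"
      using sys[OF i] U[OF i] Xp[OF i] K2[OF i] by auto
  qed
  have hw: "hurwitz (A i + B i * (U i * Xp i))" if i: "i \<in> {1..N}" for i
    using closed_loop i unfolding hurwitz_closed_loop_mat_iff[OF S blocks] by blast
  show ?thesis
  proof
    fix i assume i: "i \<in> {1..N}"
    have dim: "dim_row (X i) = n i" "dim_row (U i) = m i" "dim_row (Ec i) = p" "dim_row S = q"
      using X[OF i] U[OF i] Ec[OF i] S by auto
    obtain Pi Gamma where Pi: "Pi \<in> carrier_mat (dim_row (X i)) (dim_row S)"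
      and Gamma: "Gamma = U i * Xp i * Pi + K2 i"
      and state_eq: "Pi * S = A i * Pi + B i * Gamma + E i"
      and output_eq: "0\<^sub>m (dim_row (Ec i)) (dim_row S) = C i * Pi + D i * Gamma + F i"
      using regulator[rule_format, OF i] by blast
    have BY: "B i * (U i * (1\<^sub>m L - Xp i * X i) * Y i) = B i"
      and DY: "D i * (U i * (1\<^sub>m L - Xp i * X i) * Y i) = D i"
      using BP[OF i] DP[OF i] unfolding P_def G_def by simp_all
    have "Y i \<in> carrier_mat L (m i)"
      using Y[OF i] by simp
    from regulator_imp_data_condition[OF X[OF i] U[OF i] Ec[OF i] E[OF i] F[OF i] D11 V S
          Xp[OF i] XXp[OF i] cs[OF i] hw[OF i] this BY DY K2[OF i] Pi[unfolded dim]
          state_eq[unfolded Gamma] output_eq[unfolded Gamma dim]]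
    show "\<exists>M. data_condition S D11 V (X i) (Ec i) (E i) (F i) (Xp i) M" ..
  qed
qed

theorem theorem5:
  fixes N p q L :: nat
    and n m :: "nat \<Rightarrow> nat"
    and S D11 V :: "real mat"
    and X U Ec E F :: "nat \<Rightarrow> real mat"
    and eps1 eps2 :: real
  assumes N: "N \<ge> 1"
    and S: "S \<in> carrier_mat q q"
    and D11: "D11 \<in> carrier_mat L L"
    and V: "V \<in> carrier_mat q L"
    and dims: "\<forall>i\<in>{1..N}. X i \<in> carrier_mat (n i) L \<and> U i \<in> carrier_mat (m i) L \<and>
                  Ec i \<in> carrier_mat p L \<and> E i \<in> carrier_mat (n i) q \<and> F i \<in> carrier_mat p q"
    and S_spec: "\<forall>lam. eigenvalue (map_mat complex_of_real S) lam \<longrightarrow> Re lam \<ge> 0"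
    and exact_data: "\<exists>A B C D. \<forall>i\<in>{1..N}.
                       consistent_sys D11 V (X i) (U i) (Ec i) (E i) (F i) (A i) (B i) (C i) (D i)"
    and eps: "0 < eps1" "eps1 \<le> eps2"
  shows "\<exists>mu0. \<forall>mu \<ge> mu0. \<forall>a. admissible_graph N eps1 eps2 a \<longrightarrow>
           ((informative_cor N S a mu D11 V X U Ec E F \<longleftrightarrow>
               (\<forall>i\<in>{1..N}. \<exists>Xp M. data_condition S D11 V (X i) (Ec i) (E i) (F i) Xp M)) \<and>
            (\<forall>Xp M. (\<forall>i\<in>{1..N}. data_condition S D11 V (X i) (Ec i) (E i) (F i) (Xp i) (M i)) \<longrightarrow>
               gains_work N S a mu D11 V X U Ec E F (\<lambda>i. U i * Xp i)
                 (\<lambda>i. (U i - U i * Xp i * X i) * M i)))"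
proof -
  define bound where "bound = (\<Sum>x<q. \<Sum>y<q. \<bar>S $$ (x, y)\<bar>)"
  define mu0 where "mu0 = (bound + 1) / laplacian_margin N eps1 eps2"
  have margin: "0 < laplacian_margin N eps1 eps2"
    using laplacian_margin_pos[OF eps] .
  have "0 \<le> bound"
    unfolding bound_def by (intro sum_nonneg) auto
  show ?thesis
  proof (intro exI[of _ mu0] allI impI)
    fix mu a assume mu: "mu0 \<le> mu" and adm: "admissible_graph N eps1 eps2 a"
    have "bound + 1 \<le> mu * laplacian_margin N eps1 eps2"
      using mu margin unfolding mu0_def by (simp add: divide_le_eq)
    then have large: "bound < mu * laplacian_margin N eps1 eps2"
      by linarith
    then have "0 < mu * laplacian_margin N eps1 eps2"
      using \<open>0 \<le> bound\<close> by linarith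
    then have "0 < mu"
      using zero_less_mult_pos2 margin by blast
    then have observer: "hurwitz (observer_mat N S a mu)"
      using observer_mat_hurwitz[OF S adm eps _ large[unfolded bound_def]] by blast
    note sufficient = data_conditions_imp_gains_work[OF S D11 V dims observer]
    show "(informative_cor N S a mu D11 V X U Ec E F \<longleftrightarrow>
            (\<forall>i\<in>{1..N}. \<exists>Xp M. data_condition S D11 V (X i) (Ec i) (E i) (F i) Xp M)) \<and>
          (\<forall>Xp M. (\<forall>i\<in>{1..N}. data_condition S D11 V (X i) (Ec i) (E i) (F i) (Xp i) (M i)) \<longrightarrow>
            gains_work N S a mu D11 V X U Ec E F (\<lambda>i. U i * Xp i) (\<lambda>i. (U i - U i * Xp i * X i) * M i))"
    proof (intro conjI iffI allI impI)
      assume "informative_cor N S a mu D11 V X U Ec E F"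
      then obtain Xp K2 where ri: "\<forall>i\<in>{1..N}. right_inverse (X i) (Xp i)"
        and gw: "gains_work N S a mu D11 V X U Ec E F (\<lambda>i. U i * Xp i) K2"
        unfolding informative_cor_def by blast
      show "\<forall>i\<in>{1..N}. \<exists>Xp M. data_condition S D11 V (X i) (Ec i) (E i) (F i) Xp M"
        using gains_work_imp_data_conditions[OF S D11 V dims exact_data ri gw] by blast
    next
      assume "\<forall>i\<in>{1..N}. \<exists>Xp M. data_condition S D11 V (X i) (Ec i) (E i) (F i) Xp M"
      then obtain Xp M where dcs: "\<forall>i\<in>{1..N}. data_condition S D11 V (X i) (Ec i) (E i) (F i) (Xp i) (M i)"
        by metis
      then show "informative_cor N S a mu D11 V X U Ec E F"
        using sufficient[OF dcs] unfolding informative_cor_def data_condition_def by blast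
    next
      fix Xp M
      assume "\<forall>i\<in>{1..N}. data_condition S D11 V (X i) (Ec i) (E i) (F i) (Xp i) (M i)"
      then show "gains_work N S a mu D11 V X U Ec E F (\<lambda>i. U i * Xp i) (\<lambda>i. (U i - U i * Xp i * X i) * M i)"
        by (rule sufficient)
    qed
  qed
qed

end
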